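(* Assume $k(c)>0$ for all $c\in[0,1]$. Then the function $F$ is a classical solution of $$\max\big\{-\mathbb L_XF(x,c)+\lambda F(x,c)-\lambda x\Phi(c),\;-F_c(x,c)-x\big\}=0\quad\text{for all }(x,c)\in\mathbb R\times[0,1].$$
   Context: Fix $\theta,\sigma,\mu,\lambda>0$; $\mathbb L_Xf(x):=\frac12\sigma^2f''(x)+\theta(\mu-x)f'(x)$ (acting in the $x$-variable). $\Phi\in C^2(\mathbb R)$ is nonincreasing and strictly convex with $\Phi(1)=0$; $k(c):=\lambda+\theta+\lambda\Phi'(c)$; $G(x;c):=\frac{\mu(k(c)-\theta)}{\lambda}+\frac{k(c)(x-\mu)}{\lambda+\theta}$. $\phi_\lambda(x):=e^{\frac{\theta(x-\mu)^2}{2\sigma^2}}D_{-\lambda/\theta}\big(\frac{(x-\mu)\sqrt{2\theta}}{\sigma}\big)$ with $D_\alpha(z)=\frac{e^{-z^2/4}}{\Gamma(-\alpha)}\int_0^\infty t^{-\alpha-1}e^{-t^2/2-zt}dt$; it is the positive strictly decreasing solution of $\mathbb L_Xf=\lambda f$. For $c\in[0,1]$, $\beta_*(c)$ is the unique real solution of $G_x(x;c)\phi_\lambda(x)-G(x;c)\phi_\lambda'(x)=0$; $u(x;c):=G(x;c)-\frac{G(\beta_*(c);c)}{\phi_\lambda(\beta_*(c))}\phi_\lambda(x)$ for $x>\beta_*(c)$ and $u(x;c):=0$ otherwise; $F(x,c):=x(1-c)-\int_c^1u(x;y)\,dy$. *)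

theory Defs
  imports "HOL-Analysis.Analysis"
begin

definition strictly_convex :: "(real \<Rightarrow> real) \<Rightarrow> bool" where
  "strictly_convex f \<longleftrightarrow>
     (\<forall>x y t. x \<noteq> y \<longrightarrow> 0 < t \<longrightarrow> t < 1 \<longrightarrow>
        f ((1 - t) * x + t * y) < (1 - t) * f x + t * f y)"

text \<open>Parabolic cylinder function D_alpha (integral representation, alpha < 0).\<close>
definition pcD :: "real \<Rightarrow> real \<Rightarrow> real" where
  "pcD \<alpha> z = exp (- z\<^sup>2 / 4) / Gamma (- \<alpha>) *
      (LBINT t:{0<..}. t powr (- \<alpha> - 1) * exp (- t\<^sup>2 / 2 - z * t))"

definition phiL :: "real \<Rightarrow> real \<Rightarrow> real \<Rightarrow> real \<Rightarrow> real \<Rightarrow> real" where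
  "phiL \<theta> \<sigma> \<mu> lam x =
     exp (\<theta> * (x - \<mu>)\<^sup>2 / (2 * \<sigma>\<^sup>2)) * pcD (- lam / \<theta>) ((x - \<mu>) * sqrt (2 * \<theta>) / \<sigma>)"

definition kfun :: "real \<Rightarrow> real \<Rightarrow> (real \<Rightarrow> real) \<Rightarrow> real \<Rightarrow> real" where
  "kfun \<theta> lam \<Phi> c = lam + \<theta> + lam * deriv \<Phi> c"

definition Gfun :: "real \<Rightarrow> real \<Rightarrow> real \<Rightarrow> (real \<Rightarrow> real) \<Rightarrow> real \<Rightarrow> real \<Rightarrow> real" where
  "Gfun \<theta> \<mu> lam \<Phi> x c =
     \<mu> * (kfun \<theta> lam \<Phi> c - \<theta>) / lam + kfun \<theta> lam \<Phi> c * (x - \<mu>) / (lam + \<theta>)"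

definition betaStar :: "real \<Rightarrow> real \<Rightarrow> real \<Rightarrow> real \<Rightarrow> (real \<Rightarrow> real) \<Rightarrow> real \<Rightarrow> real" where
  "betaStar \<theta> \<sigma> \<mu> lam \<Phi> c =
     (THE b. deriv (\<lambda>x. Gfun \<theta> \<mu> lam \<Phi> x c) b * phiL \<theta> \<sigma> \<mu> lam b
             - Gfun \<theta> \<mu> lam \<Phi> b c * deriv (phiL \<theta> \<sigma> \<mu> lam) b = 0)"

definition ufun :: "real \<Rightarrow> real \<Rightarrow> real \<Rightarrow> real \<Rightarrow> (real \<Rightarrow> real) \<Rightarrow> real \<Rightarrow> real \<Rightarrow> real" where
  "ufun \<theta> \<sigma> \<mu> lam \<Phi> x c =
     (let b = betaStar \<theta> \<sigma> \<mu> lam \<Phi> c in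
      if x > b then Gfun \<theta> \<mu> lam \<Phi> x c
                    - Gfun \<theta> \<mu> lam \<Phi> b c / phiL \<theta> \<sigma> \<mu> lam b * phiL \<theta> \<sigma> \<mu> lam x
      else 0)"

definition Ffun :: "real \<Rightarrow> real \<Rightarrow> real \<Rightarrow> real \<Rightarrow> (real \<Rightarrow> real) \<Rightarrow> real \<Rightarrow> real \<Rightarrow> real" where
  "Ffun \<theta> \<sigma> \<mu> lam \<Phi> x c =
     x * (1 - c) - integral {c..1} (\<lambda>y. ufun \<theta> \<sigma> \<mu> lam \<Phi> x y)"

end

theory Submission
  imports Defs "HOL-Real_Asymp.Real_Asymp"
begin

(*
  Writing \<phi> = \<phi>_\<lambda> as  \<Psi>_{a-1}(s(x-\<mu>)) / \<Gamma>(a)  with the integrals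
  \<Psi>_p(z) = \<integral>_0^\<infinity> t^p e^{-t^2/2 - z t} dt,  a = \<lambda>/\<theta>,  s = \<surd>(2\<theta>)/\<sigma>,  one gets
  \<Psi>_p' = -\<Psi>_{p+1} and a three-term recurrence, hence \<phi> > 0, \<phi>' < 0, \<phi>'' > 0 and
  L_X \<phi> = \<lambda>\<phi>.
  For each c the Wronskian-type function H(\<cdot>,c) = G_x \<phi> - G \<phi>' is strictly
  increasing up to the zero of G and positive afterwards, so it has exactly one
  root \<beta>(c); \<beta> is continuous and strictly decreasing in c.  The integrand
  u(\<cdot>,y) is C^1 in x (smooth fit at \<beta>(y)) and satisfies
  (L_X - \<lambda>) u(\<cdot>,y) = \<theta>\<mu> - k(y) x  for x > \<beta>(y).  Differentiating under the
  integral (dominated convergence, with the finite exceptional set {y. \<beta>(y) = x})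
  gives F_x, F_xx, F_c and their continuity; integrating the pointwise identity
  in y turns the HJB expression into \<integral>_c^1 of a source term which vanishes where
  x > \<beta>(y) and is nonpositive elsewhere.  Since \<beta> is decreasing this yields
  the two cases x > \<beta>(c) and x \<le> \<beta>(c) of the variational inequality.
*)

section \<open>The integrals \<open>\<Psi>\<^sub>p\<close>\<close>

text \<open>\<open>\<Psi> p z\<close> is the integral in the representation of the parabolic cylinder
  function: \<open>D\<^sub>\<alpha>(z) = exp(-z\<^sup>2/4) \<Psi>(-\<alpha>-1, z) / \<Gamma>(-\<alpha>)\<close>.\<close>
definition Psi :: "real \<Rightarrow> real \<Rightarrow> real" where
  "Psi p z = (LBINT t:{0<..}. t powr p * exp (- t\<^sup>2 / 2 - z * t))"

lemma powr_exp_integrable_Ioi: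
  assumes "p > -1"
  shows "set_integrable lborel {0<..} (\<lambda>t::real. t powr p / exp t)"
proof -
  have "((\<lambda>t. t powr (p + 1 - 1) / exp t) has_integral Gamma (p+1)) {0..}"
    by (rule Gamma_integral_real) (use assms in auto)
  hence "(\<lambda>t. t powr p / exp t) integrable_on {0..}" by (auto simp: has_integral_iff)
  hence "(\<lambda>t. t powr p / exp t) absolutely_integrable_on {0..}"
    by (intro nonnegative_absolutely_integrable_1) auto
  hence "(\<lambda>t. t powr p / exp t) absolutely_integrable_on {0<..}"
    by (rule set_integrable_subset) auto
  hence "integrable lebesgue (\<lambda>t. indicator {0<..} t *\<^sub>R (t powr p / exp t))"
    by (simp add: set_integrable_def)
  hence "integrable lborel (\<lambda>t. indicator {0<..} t *\<^sub>R (t powr p / exp t))"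
    by (subst (asm) integrable_completion)
       (auto intro!: borel_measurable_continuous_on_indicator continuous_intros)
  thus ?thesis by (simp add: set_integrable_def)
qed

text \<open>The integrand of \<open>\<Psi> p z\<close> is dominated by \<open>exp((z-1)\<^sup>2/2) t\<^sup>p exp(-t)\<close>,
  because \<open>-t\<^sup>2/2 - z t \<le> (z-1)\<^sup>2/2 - t\<close>.\<close>
lemma Psi_integrable:
  assumes "p > -1"
  shows "set_integrable lborel {0<..} (\<lambda>t::real. t powr p * exp (- t\<^sup>2 / 2 - z * t))"
proof -
  have "set_integrable lborel {0<..} (\<lambda>t::real. exp ((z-1)\<^sup>2/2) * (t powr p / exp t))"
    using powr_exp_integrable_Ioi[OF assms] by (rule set_integrable_mult_right)
  thus ?thesis
  proof (rule set_integrable_bound)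
    show "set_borel_measurable lborel {0<..} (\<lambda>t::real. t powr p * exp (- t\<^sup>2 / 2 - z * t))"
      unfolding set_borel_measurable_def measurable_lborel2
      by (intro borel_measurable_continuous_on_indicator) (auto intro!: continuous_intros)
    show "AE t in lborel. t \<in> {0<..} \<longrightarrow> norm (t powr p * exp (- t\<^sup>2 / 2 - z * t))
        \<le> norm (exp ((z-1)\<^sup>2/2) * (t powr p / exp t))"
    proof (intro AE_I2 impI)
      fix t :: real assume "t \<in> {0<..}"
      have "- t\<^sup>2 / 2 - z * t \<le> (z-1)\<^sup>2/2 + (- t)"
        using sum_squares_ge_zero[of "t + z - 1" 0] by (simp add: power2_eq_square algebra_simps)
      hence "exp (- t\<^sup>2 / 2 - z * t) \<le> exp ((z-1)\<^sup>2/2) / exp t"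
        by (simp add: exp_add[symmetric] exp_diff[symmetric] del: exp_add)
      hence "t powr p * exp (- t\<^sup>2 / 2 - z * t) \<le> t powr p * (exp ((z-1)\<^sup>2/2) / exp t)"
        by (intro mult_left_mono) auto
      thus "norm (t powr p * exp (- t\<^sup>2 / 2 - z * t)) \<le> norm (exp ((z-1)\<^sup>2/2) * (t powr p / exp t))"
        by (simp add: abs_mult mult_ac)
    qed
  qed
qed

lemma set_integral_pos_Ioi:
  fixes f :: "real \<Rightarrow> real"
  assumes int: "set_integrable lborel {0<..} f" and pos: "\<And>t. t > 0 \<Longrightarrow> f t > 0"
  shows "(LBINT t:{0<..}. f t) > 0"
proof -
  have nn: "AE t in lborel. 0 \<le> indicator {0<..} t *\<^sub>R f t"
    using pos by (intro AE_I2) (auto simp: indicator_def less_imp_le)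
  have ge: "(LBINT t:{0<..}. f t) \<ge> 0"
    unfolding set_lebesgue_integral_def using nn by (intro integral_nonneg_AE) auto
  have "(LBINT t:{0<..}. f t) \<noteq> 0"
  proof
    assume "(LBINT t:{0<..}. f t) = 0"
    hence "AE t in lborel. indicator {0<..} t *\<^sub>R f t = 0"
      using integral_nonneg_eq_0_iff_AE[OF int[unfolded set_integrable_def] nn]
      by (simp add: set_lebesgue_integral_def)
    moreover have "AE t in lborel. indicat_real {0<..} t *\<^sub>R f t = 0 \<longrightarrow> t \<notin> {0<..}"
        using pos by (intro AE_I2) (force simp: indicator_def)
    ultimately have "AE t in lborel. (t::real) \<notin> {0<..}" by eventually_elim blast
    hence "{0::real<..} \<in> null_sets lborel"
      by (subst AE_iff_null_sets) auto
    hence "{0<..(1::real)} \<in> null_sets lborel"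
      by (rule null_sets_subset) auto
    hence "emeasure lborel {0<..(1::real)} = 0" by auto
    thus False by simp
  qed
  with ge show ?thesis by simp
qed

lemma Psi_pos: "p > -1 \<Longrightarrow> Psi p z > 0"
  unfolding Psi_def by (rule set_integral_pos_Ioi[OF Psi_integrable]) auto

lemma exp_second_order_bound: "\<bar>exp s - 1 - s\<bar> \<le> s\<^sup>2 * exp \<bar>s::real\<bar>"
proof -
  obtain t where t: "\<bar>t\<bar> \<le> \<bar>s\<bar>" "exp s = (\<Sum>m<2. s ^ m / fact m) + exp t / fact 2 * s ^ 2"
    using Maclaurin_exp_le[of s 2] by blast
  have "(\<Sum>m<2. s ^ m / fact m) = 1 + s" by (simp add: numeral_2_eq_2)
  hence "\<bar>exp s - 1 - s\<bar> = exp t / 2 * s\<^sup>2" using t(2) by simp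
  also have "\<dots> \<le> exp \<bar>s\<bar> * s\<^sup>2"
  proof (rule mult_right_mono)
    have "exp t \<le> exp \<bar>s\<bar>" using t(1) by simp
    thus "exp t / 2 \<le> exp \<bar>s\<bar>" using exp_gt_zero[of t] by linarith
  qed simp
  finally show ?thesis by (simp add: mult.commute)
qed

lemma deriv_from_quadratic_bound:
  fixes f :: "real \<Rightarrow> real"
  assumes "\<And>z. \<bar>z - z0\<bar> \<le> 1 \<Longrightarrow> \<bar>f z - f z0 - D * (z - z0)\<bar> \<le> C * (z - z0)\<^sup>2"
  shows "(f has_real_derivative D) (at z0)"
proof -
  have lim: "((\<lambda>z. C * \<bar>z - z0\<bar>) \<longlongrightarrow> C * \<bar>z0 - z0\<bar>) (at z0)"
    by (intro tendsto_intros)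
  have ev: "\<forall>\<^sub>F z in at z0. dist ((f z - f z0) / (z - z0)) D \<le> dist (C * \<bar>z - z0\<bar>) 0"
  proof -
    have "\<forall>\<^sub>F z in at z0. z \<in> ball z0 1 \<and> z \<noteq> z0"
      by (intro eventually_conj eventually_at_in_open') (auto simp: eventually_at_filter)
    thus ?thesis
    proof eventually_elim
      case (elim z)
      hence z: "\<bar>z - z0\<bar> \<le> 1" "z \<noteq> z0" by (auto simp: dist_real_def)
      have "(f z - f z0) / (z - z0) - D = (f z - f z0 - D * (z - z0)) / (z - z0)"
        using z by (simp add: field_simps)
      hence "\<bar>(f z - f z0) / (z - z0) - D\<bar> = \<bar>f z - f z0 - D * (z - z0)\<bar> / \<bar>z - z0\<bar>"
        by (simp add: abs_divide)
      also have "\<dots> \<le> C * (z - z0)\<^sup>2 / \<bar>z - z0\<bar>"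
        by (rule divide_right_mono[OF assms[OF z(1)]]) auto
      also have "C * (z - z0)\<^sup>2 / \<bar>z - z0\<bar> = C * \<bar>z - z0\<bar>"
      proof -
        show ?thesis using z by (simp add: field_simps power2_eq_square)
      qed
      finally have "\<bar>(f z - f z0) / (z - z0) - D\<bar> \<le> C * \<bar>z - z0\<bar>" .
      thus ?case by (simp add: dist_real_def)
    qed
  qed
  have "((\<lambda>z. (f z - f z0) / (z - z0)) \<longlongrightarrow> D) (at z0)"
    by (rule metric_tendsto_imp_tendsto[OF _ ev]) (use lim in simp)
  thus ?thesis by (simp add: has_field_derivative_iff)
qed

lemma Psi_integrand_taylor_bound:
  fixes t z z0 p :: real
  assumes t: "t > 0" and zz: "\<bar>z - z0\<bar> \<le> 1"
  shows "\<bar>t powr p * exp (- t\<^sup>2 / 2 - z * t) - t powr p * exp (- t\<^sup>2 / 2 - z0 * t)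
            + (z - z0) * (t powr (p+1) * exp (- t\<^sup>2 / 2 - z0 * t))\<bar>
         \<le> (z - z0)\<^sup>2 * (t powr (p+2) * exp (- t\<^sup>2 / 2 - (z0 - 1) * t))"
proof -
  define s where "s = - (z - z0) * t"
  define E0 where "E0 = exp (- t\<^sup>2 / 2 - z0 * t)"
  have e1: "exp (- t\<^sup>2 / 2 - z * t) = E0 * exp s"
    unfolding E0_def s_def by (simp add: exp_add[symmetric] algebra_simps)
  have p1: "t powr (p+1) = t powr p * t" using t by (simp add: powr_add)
  have p2: "t powr (p+2) = t powr p * t\<^sup>2" using t by (simp add: powr_add power2_eq_square)
  have "\<bar>exp s - 1 - s\<bar> \<le> s\<^sup>2 * exp \<bar>s\<bar>" by (rule exp_second_order_bound)
  also have "\<dots> \<le> ((z - z0)\<^sup>2 * t\<^sup>2) * exp t"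
  proof (rule mult_mono)
    show "s\<^sup>2 \<le> (z - z0)\<^sup>2 * t\<^sup>2" by (simp add: s_def power_mult_distrib power2_commute)
    have "\<bar>s\<bar> \<le> t" unfolding s_def using zz t
      by (simp add: abs_mult mult_le_cancel_right1 abs_minus_commute)
    thus "exp \<bar>s\<bar> \<le> exp t" by simp
  qed auto
  finally have b: "\<bar>exp s - 1 - s\<bar> \<le> (z - z0)\<^sup>2 * t\<^sup>2 * exp t" .
  have "t powr p * exp (- t\<^sup>2 / 2 - z * t) - t powr p * E0 + (z - z0) * (t powr (p+1) * E0)
        = t powr p * E0 * (exp s - 1 - s)"
    unfolding e1 p1 by (simp add: s_def algebra_simps)
  hence "\<bar>t powr p * exp (- t\<^sup>2 / 2 - z * t) - t powr p * E0 + (z - z0) * (t powr (p+1) * E0)\<bar>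
         = t powr p * E0 * \<bar>exp s - 1 - s\<bar>"
    using t by (simp add: abs_mult E0_def)
  also have "\<dots> \<le> t powr p * E0 * ((z - z0)\<^sup>2 * t\<^sup>2 * exp t)"
    by (rule mult_left_mono[OF b]) (simp add: E0_def)
  also have "\<dots> = (z - z0)\<^sup>2 * (t powr (p+2) * exp (- t\<^sup>2 / 2 - (z0 - 1) * t))"
    unfolding p2 E0_def by (simp add: algebra_simps exp_add[symmetric])
  finally show ?thesis unfolding E0_def .
qed

lemma Psi_deriv:
  assumes p: "p > -1"
  shows "(Psi p has_real_derivative - Psi (p+1) z0) (at z0)"
proof (rule deriv_from_quadratic_bound[where C = "Psi (p+2) (z0 - 1)"])
  fix z assume zz: "\<bar>z - z0\<bar> \<le> 1"
  define g where "g t = t powr p * exp (- t\<^sup>2 / 2 - z * t) - t powr p * exp (- t\<^sup>2 / 2 - z0 * t)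
      + (z - z0) * (t powr (p+1) * exp (- t\<^sup>2 / 2 - z0 * t))" for t :: real
  define h where "h t = (z - z0)\<^sup>2 * (t powr (p+2) * exp (- t\<^sup>2 / 2 - (z0 - 1) * t))" for t :: real
  have i1: "set_integrable lborel {0<..} (\<lambda>t::real. t powr p * exp (- t\<^sup>2 / 2 - z * t))"
    "set_integrable lborel {0<..} (\<lambda>t::real. t powr p * exp (- t\<^sup>2 / 2 - z0 * t))"
    "set_integrable lborel {0<..} (\<lambda>t::real. t powr (p+1) * exp (- t\<^sup>2 / 2 - z0 * t))"
    "set_integrable lborel {0<..} (\<lambda>t::real. t powr (p+2) * exp (- t\<^sup>2 / 2 - (z0 - 1) * t))"
    by (rule Psi_integrable; use p in simp)+
  have gi: "set_integrable lborel {0<..} g"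
    unfolding g_def using i1 by (intro set_integral_add set_integral_diff set_integrable_mult_right) auto
  have hi: "set_integrable lborel {0<..} h"
    unfolding h_def using i1 by (intro set_integrable_mult_right) auto
  have eq: "Psi p z - Psi p z0 - (- Psi (p + 1) z0) * (z - z0) = (LBINT t:{0<..}. g t)"
    unfolding g_def Psi_def using i1
    by (subst set_integral_add set_integral_diff set_integral_mult_right,
        (auto intro!: set_integral_diff set_integrable_mult_right)[2])+
       (simp add: algebra_simps)
  have hv: "(LBINT t:{0<..}. h t) = (z - z0)\<^sup>2 * Psi (p+2) (z0 - 1)"
    unfolding h_def Psi_def by (simp add: set_integral_mult_right)
  have "norm (LBINT t:{0<..}. g t) \<le> (LBINT t:{0<..}. norm (g t))"
    by (rule set_integral_norm_bound[OF gi])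
  also have "\<dots> \<le> (LBINT t:{0<..}. h t)"
    using set_integrable_norm[OF gi] Psi_integrand_taylor_bound[OF _ zz]
    by (intro set_integral_mono[OF _ hi]) (auto simp: g_def h_def)
  finally show "\<bar>Psi p z - Psi p z0 - - Psi (p + 1) z0 * (z - z0)\<bar> \<le> Psi (p + 2) (z0 - 1) * (z - z0)\<^sup>2"
    unfolding eq hv by (simp add: mult.commute)
qed

lemma Psi_isCont: "p > -1 \<Longrightarrow> isCont (Psi p) z"
  using DERIV_isCont[OF Psi_deriv] by blast

lemma Psi_integrand_deriv:
  fixes t z a :: real
  assumes "t > 0"
  shows "((\<lambda>t. t powr a * exp (- t\<^sup>2 / 2 - z * t)) has_real_derivative
           a * (t powr (a-1) * exp (- t\<^sup>2 / 2 - z * t)) - t powr (a+1) * exp (- t\<^sup>2 / 2 - z * t)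
           - z * (t powr a * exp (- t\<^sup>2 / 2 - z * t))) (at t)"
proof -
  have "t powr (a+1) = t powr a * t" using assms by (simp add: powr_add)
  moreover have "((\<lambda>t. t powr a * exp (- t\<^sup>2 / 2 - z * t)) has_real_derivative
          a * t powr (a - 1) * exp (- t\<^sup>2 / 2 - z * t)
          + t powr a * (exp (- t\<^sup>2 / 2 - z * t) * (- (2 * t) / 2 - z))) (at t)"
    using assms by (auto intro!: derivative_eq_intros)
  ultimately show ?thesis by (simp add: algebra_simps)
qed

text \<open>Integrating \<open>Psi_integrand_deriv\<close> over \<open>(0,\<infinity>)\<close>, where the boundary terms vanish,
  gives the recurrence behind the differential equation of \<open>\<phi>\<^sub>\<lambda>\<close>.\<close>
lemma Psi_recurrence:
  assumes a: "a > 0"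
  shows "a * Psi (a-1) z - Psi (a+1) z - z * Psi a z = 0"
proof -
  define F where "F t = t powr a * exp (- t\<^sup>2 / 2 - z * t)" for t :: real
  define f where "f t = a * (t powr (a-1) * exp (- t\<^sup>2 / 2 - z * t)) - t powr (a+1) * exp (- t\<^sup>2 / 2 - z * t)
     - z * (t powr a * exp (- t\<^sup>2 / 2 - z * t))" for t :: real
  have i1: "set_integrable lborel {0<..} (\<lambda>t::real. t powr (a-1) * exp (- t\<^sup>2 / 2 - z * t))"
    "set_integrable lborel {0<..} (\<lambda>t::real. t powr (a+1) * exp (- t\<^sup>2 / 2 - z * t))"
    "set_integrable lborel {0<..} (\<lambda>t::real. t powr a * exp (- t\<^sup>2 / 2 - z * t))"
    by (rule Psi_integrable; use a in simp)+
  have "(LBINT t=ereal 0..\<infinity>. f t) = 0 - 0"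
  proof (rule interval_integral_FTC_integrable[where F = F])
    fix t :: real assume "ereal 0 < ereal t" "ereal t < \<infinity>"
    hence t: "t > 0" by simp
    show "(F has_vector_derivative f t) (at t)"
      using Psi_integrand_deriv[OF t] unfolding F_def[abs_def] f_def
      by (simp add: has_real_derivative_iff_has_vector_derivative)
    show "isCont f t" unfolding f_def using t by (auto intro!: continuous_intros)
  next
    have "einterval (ereal 0) \<infinity> = {0<..}" by (auto simp: einterval_def)
    thus "set_integrable lborel (einterval (ereal 0) \<infinity>) f"
      unfolding f_def using i1 by (simp add: set_integral_diff set_integrable_mult_right)
    show "((F \<circ> real_of_ereal) \<longlongrightarrow> 0) (at_right (ereal 0))"
      unfolding ereal_tendsto_simps F_def using a by real_asymp
    show "((F \<circ> real_of_ereal) \<longlongrightarrow> 0) (at_left \<infinity>)"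
      unfolding ereal_tendsto_simps F_def by real_asymp
  qed simp
  hence "(LBINT t:{0<..}. f t) = 0" by (simp add: interval_integral_to_infinity_eq)
  moreover have "(LBINT t:{0<..}. f t) = a * Psi (a-1) z - Psi (a+1) z - z * Psi a z"
    unfolding f_def Psi_def using i1
    by (subst set_integral_diff set_integral_mult_right,
        (auto intro!: set_integral_diff set_integrable_mult_right)[2])+ simp
  ultimately show ?thesis by simp
qed


section \<open>Parametric integrals over compact intervals\<close>

lemma negligible_finite_diff:
  fixes S :: "real set" and f :: "real \<Rightarrow> real"
  assumes "finite N"
  shows "negligible {y \<in> S - (S - N). f y \<noteq> 0}" "negligible {y \<in> (S - N) - S. f y \<noteq> 0}"
proof -
  have "{y \<in> S - (S - N). f y \<noteq> 0} \<subseteq> N" by auto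
  thus "negligible {y \<in> S - (S - N). f y \<noteq> 0}"
    using negligible_subset[OF negligible_finite[OF assms]] by blast
  show "negligible {y \<in> (S - N) - S. f y \<noteq> 0}" by (rule negligible_subset[of "{}"]) auto
qed

lemma integral_diff_finite: "finite N \<Longrightarrow> integral (S - N) f = integral S (f :: real \<Rightarrow> real)"
  using integral_spike_set[OF negligible_finite_diff(2,1)] by metis

lemma integrable_diff_finite_iff:
  "finite N \<Longrightarrow> (f :: real \<Rightarrow> real) integrable_on (S - N) \<longleftrightarrow> f integrable_on S"
  using integrable_spike_set[OF _ negligible_finite_diff(1,2)]
        integrable_spike_set[OF _ negligible_finite_diff(2,1)] by metis

lemma dominated_convergence_finite_exceptions:
  fixes f :: "nat \<Rightarrow> real \<Rightarrow> real"
  assumes fin: "finite N" and int: "\<And>n. f n integrable_on {a..b}"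
    and bound: "\<And>n y. y \<in> {a..b} - N \<Longrightarrow> \<bar>f n y\<bar> \<le> M"
    and conv: "\<And>y. y \<in> {a..b} - N \<Longrightarrow> (\<lambda>n. f n y) \<longlonglongrightarrow> g y"
  shows "g integrable_on {a..b}" "(\<lambda>n. integral {a..b} (f n)) \<longlonglongrightarrow> integral {a..b} g"
proof -
  have fS: "f n integrable_on {a..b} - N" for n
    using int integrable_diff_finite_iff[OF fin] by blast
  have MS: "(\<lambda>_. M) integrable_on {a..b} - N"
    using integrable_diff_finite_iff[OF fin] by (simp add: integrable_const_ivl)
  have bound': "norm (f n y) \<le> M" if "y \<in> {a..b} - N" for n y
    using bound that by simp
  note dc = dominated_convergence[OF fS MS bound' conv]
  show "g integrable_on {a..b}" "(\<lambda>n. integral {a..b} (f n)) \<longlonglongrightarrow> integral {a..b} g"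
    using dc by (simp_all add: integral_diff_finite[OF fin] integrable_diff_finite_iff[OF fin])
qed

lemma parametric_difference_quotients:
  fixes g :: "real \<Rightarrow> real \<Rightarrow> real" and g' :: "real \<Rightarrow> real"
  assumes int: "\<And>x. g x integrable_on {a..b}"
    and fin: "finite N"
    and der: "\<And>y. y \<in> {a..b} \<Longrightarrow> y \<notin> N \<Longrightarrow> ((\<lambda>x. g x y) has_real_derivative g' y) (at x0)"
    and lip: "\<And>x y. y \<in> {a..b} \<Longrightarrow> \<bar>x - x0\<bar> \<le> 1 \<Longrightarrow> \<bar>g x y - g x0 y\<bar> \<le> L * \<bar>x - x0\<bar>"
    and X: "\<And>n. X n \<noteq> x0" "X \<longlonglongrightarrow> x0"
  shows "g' integrable_on {a..b}"
    and "(\<lambda>n. (integral {a..b} (g (X n)) - integral {a..b} (g x0)) / (X n - x0))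
           \<longlonglongrightarrow> integral {a..b} g'"
proof -
  obtain N0 where N0: "\<And>n. n \<ge> N0 \<Longrightarrow> dist (X n) x0 < 1"
    using X(2) unfolding lim_sequentially by (meson zero_less_one)
  define q where "q n y = (g (X (n + N0)) y - g x0 y) / (X (n + N0) - x0)" for n y
  have bnd: "\<bar>q n y\<bar> \<le> L" if y: "y \<in> {a..b} - N" for n y
  proof -
    have "\<bar>X (n + N0) - x0\<bar> \<le> 1" using N0[of "n + N0"] by (simp add: dist_real_def)
    hence "\<bar>g (X (n + N0)) y - g x0 y\<bar> \<le> L * \<bar>X (n + N0) - x0\<bar>" using lip y by blast
    thus ?thesis unfolding q_def using X(1)[of "n + N0"] by (simp add: abs_divide divide_le_eq)
  qed
  have conv: "(\<lambda>n. q n y) \<longlonglongrightarrow> g' y" if y: "y \<in> {a..b} - N" for y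
  proof -
    have "((\<lambda>x. (g x y - g x0 y) / (x - x0)) \<longlongrightarrow> g' y) (at x0)"
      using der[of y] y by (simp add: has_field_derivative_iff)
    moreover have "(\<lambda>n. X (n + N0)) \<longlonglongrightarrow> x0" using X(2) by (rule LIMSEQ_ignore_initial_segment)
    ultimately show ?thesis
      using X(1) tendsto_at_iff_sequentially[of "\<lambda>x. (g x y - g x0 y) / (x - x0)" "g' y" x0 UNIV]
      by (auto simp: q_def o_def)
  qed
  have "\<And>n. q n integrable_on {a..b}"
    unfolding q_def by (intro integrable_on_divide integrable_diff int)
  note dc = dominated_convergence_finite_exceptions[OF fin this bnd conv]
  show "g' integrable_on {a..b}" by (rule dc(1))
  have eq: "integral {a..b} (q n)
      = (integral {a..b} (g (X (n + N0))) - integral {a..b} (g x0)) / (X (n + N0) - x0)" for n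
    unfolding q_def by (simp add: integral_diff int)
  have "(\<lambda>n. (integral {a..b} (g (X (n + N0))) - integral {a..b} (g x0)) / (X (n + N0) - x0))
          \<longlonglongrightarrow> integral {a..b} g'"
    using dc(2) unfolding eq .
  thus "(\<lambda>n. (integral {a..b} (g (X n)) - integral {a..b} (g x0)) / (X n - x0)) \<longlonglongrightarrow> integral {a..b} g'"
    by (rule LIMSEQ_offset)
qed

lemma parametric_integral_has_derivative:
  fixes g :: "real \<Rightarrow> real \<Rightarrow> real" and g' :: "real \<Rightarrow> real"
  assumes int: "\<And>x. g x integrable_on {a..b}"
    and fin: "finite N"
    and der: "\<And>y. y \<in> {a..b} \<Longrightarrow> y \<notin> N \<Longrightarrow> ((\<lambda>x. g x y) has_real_derivative g' y) (at x0)"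
    and lip: "\<And>x y. y \<in> {a..b} \<Longrightarrow> \<bar>x - x0\<bar> \<le> 1 \<Longrightarrow> \<bar>g x y - g x0 y\<bar> \<le> L * \<bar>x - x0\<bar>"
  shows "g' integrable_on {a..b}"
    and "((\<lambda>x. integral {a..b} (g x)) has_real_derivative integral {a..b} g') (at x0)"
proof -
  have "(\<lambda>n. x0 + 1 / real (Suc n)) \<longlonglongrightarrow> x0 + 0"
    by (intro tendsto_intros LIMSEQ_Suc lim_inverse_n')
  hence X: "(\<lambda>n. x0 + 1 / real (Suc n)) \<longlonglongrightarrow> x0" by simp
  have "\<And>n. x0 + 1 / real (Suc n) \<noteq> x0" by simp
  with int fin der lip show "g' integrable_on {a..b}"
    using X by (rule parametric_difference_quotients(1))
  have "((\<lambda>x. (integral {a..b} (g x) - integral {a..b} (g x0)) / (x - x0)) \<longlongrightarrow> integral {a..b} g') (at x0)"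
    unfolding tendsto_at_iff_sequentially o_def
  proof (intro allI impI)
    fix X assume X: "\<forall>n. X n \<in> UNIV - {x0}" "X \<longlonglongrightarrow> x0"
    hence "\<And>n. X n \<noteq> x0" by auto
    with int fin der lip show "(\<lambda>n. (integral {a..b} (g (X n)) - integral {a..b} (g x0)) / (X n - x0))
                       \<longlonglongrightarrow> integral {a..b} g'"
      using X(2) by (rule parametric_difference_quotients(2))
  qed
  thus "((\<lambda>x. integral {a..b} (g x)) has_real_derivative integral {a..b} g') (at x0)"
    unfolding has_field_derivative_iff .
qed

lemma truncation_tendsto:
  fixes f :: "nat \<Rightarrow> real \<Rightarrow> real"
  assumes cs: "cs \<longlonglongrightarrow> c" and y: "y \<noteq> c" and f: "(\<lambda>n. f n y) \<longlonglongrightarrow> l"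
  shows "(\<lambda>n. if y \<in> {cs n..b} then f n y else 0) \<longlonglongrightarrow> (if y \<in> {c..b} then l else 0)"
proof (cases "y < c")
  case True
  have "\<forall>\<^sub>F n in sequentially. y < cs n" using cs True by (rule order_tendstoD(1))
  hence "\<forall>\<^sub>F n in sequentially. (if y \<in> {cs n..b} then f n y else 0) = 0"
    by eventually_elim auto
  thus ?thesis using True by (simp add: tendsto_eventually)
next
  case False
  hence "c < y" using y by simp
  with cs have "\<forall>\<^sub>F n in sequentially. cs n < y" by (rule order_tendstoD(2))
  hence "\<forall>\<^sub>F n in sequentially. (if y \<le> b then f n y else 0) = (if y \<in> {cs n..b} then f n y else 0)"
    by eventually_elim auto
  moreover have "(\<lambda>n. if y \<le> b then f n y else 0) \<longlonglongrightarrow> (if y \<in> {c..b} then l else 0)"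
    using f \<open>c < y\<close> by auto
  ultimately show ?thesis by (rule Lim_transform_eventually[rotated])
qed

lemma tail_integral_as_restriction:
  fixes h :: "real \<Rightarrow> real"
  assumes "c \<in> {a..b}"
  shows "integral {c..b} h = integral {a..b} (\<lambda>y. if y \<in> {c..b} then h y else 0)"
    and "h integrable_on {c..b} \<longleftrightarrow> (\<lambda>y. if y \<in> {c..b} then h y else 0) integrable_on {a..b}"
  using assms Henstock_Kurzweil_Integration.integral_restrict_Int[of "{a..b}" "{c..b}" h]
    integrable_restrict_Int[of "{c..b}" h "{a..b}"]
  by (simp_all add: Int_absorb2)

lemma parametric_tail_integral_continuous:
  fixes g :: "real \<Rightarrow> real \<Rightarrow> real" and N :: "real \<Rightarrow> real set"
  assumes int: "\<And>x c. c \<in> {a..b} \<Longrightarrow> g x integrable_on {c..b}"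
    and bnd: "\<And>B. \<exists>M. \<forall>x y. \<bar>x\<bar> \<le> B \<longrightarrow> y \<in> {a..b} \<longrightarrow> \<bar>g x y\<bar> \<le> M"
    and fin: "\<And>x. finite (N x)"
    and pc: "\<And>x y. y \<in> {a..b} \<Longrightarrow> y \<notin> N x \<Longrightarrow> isCont (\<lambda>x. g x y) x"
  shows "continuous_on (UNIV \<times> {a..b}) (\<lambda>p. integral {snd p..b} (g (fst p)))"
  unfolding continuous_on_sequentially
proof (intro allI ballI impI, elim conjE)
  fix P and p0 :: "real \<times> real"
  assume p0: "p0 \<in> UNIV \<times> {a..b}" and Pin: "\<forall>n. P n \<in> UNIV \<times> {a..b}" and PL: "P \<longlonglongrightarrow> p0"
  define xs where "xs n = fst (P n)" for n
  define cs where "cs n = snd (P n)" for n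
  obtain x0 c0 where p0_eq: "p0 = (x0, c0)" by fastforce
  have xsL: "xs \<longlonglongrightarrow> x0" and csL: "cs \<longlonglongrightarrow> c0"
    unfolding xs_def cs_def using tendsto_fst[OF PL] tendsto_snd[OF PL] p0_eq by auto
  have cs_in: "cs n \<in> {a..b}" for n using Pin by (auto simp: cs_def mem_Times_iff)
  have c0_in: "c0 \<in> {a..b}" using p0 p0_eq by auto
  obtain B where B: "\<And>n. \<bar>xs n\<bar> \<le> B"
    using convergent_imp_Bseq[OF convergentI[OF xsL]] unfolding Bseq_def by auto
  obtain M where M: "\<And>x y. \<bar>x\<bar> \<le> B \<Longrightarrow> y \<in> {a..b} \<Longrightarrow> \<bar>g x y\<bar> \<le> M"
    using bnd[of B] by blast
  define f where "f n y = (if y \<in> {cs n..b} then g (xs n) y else 0)" for n y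
  define fl where "fl y = (if y \<in> {c0..b} then g x0 y else 0)" for y
  have fint: "f n integrable_on {a..b}" for n
    unfolding f_def using tail_integral_as_restriction(2)[OF cs_in] int[OF cs_in] by blast
  have fb: "\<bar>f n y\<bar> \<le> M" if "y \<in> {a..b} - insert c0 (N x0)" for n y
    using M[OF B, of y n] that unfolding f_def by auto
  have fc: "(\<lambda>n. f n y) \<longlonglongrightarrow> fl y" if y: "y \<in> {a..b} - insert c0 (N x0)" for y
    unfolding f_def fl_def
    by (rule truncation_tendsto[OF csL]) (use y in \<open>auto intro: isCont_tendsto_compose[OF pc xsL]\<close>)
  have "(\<lambda>n. integral {a..b} (f n)) \<longlonglongrightarrow> integral {a..b} fl"
    using fin by (intro dominated_convergence_finite_exceptions(2)[where N = "insert c0 (N x0)", OF _ fint fb fc]) simp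
  thus "((\<lambda>p. integral {snd p..b} (g (fst p))) \<circ> P) \<longlonglongrightarrow> integral {snd p0..b} (g (fst p0))"
    using tail_integral_as_restriction(1)[OF cs_in] tail_integral_as_restriction(1)[OF c0_in] p0_eq
    unfolding o_def f_def fl_def xs_def cs_def by simp
qed

lemma continuous_on_strip_bounded:
  fixes h :: "real \<Rightarrow> real \<Rightarrow> real"
  assumes "continuous_on (UNIV \<times> {a..b}) (\<lambda>p. h (fst p) (snd p))"
  shows "\<exists>M. \<forall>x y. \<bar>x\<bar> \<le> B \<longrightarrow> y \<in> {a..b} \<longrightarrow> \<bar>h x y\<bar> \<le> M"
proof -
  have "continuous_on ({-B..B} \<times> {a..b}) (\<lambda>p. h (fst p) (snd p))"
    by (rule continuous_on_subset[OF assms]) auto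
  hence "compact ((\<lambda>p. h (fst p) (snd p)) ` ({-B..B} \<times> {a..b}))"
    by (intro compact_continuous_image compact_Times compact_Icc)
  then obtain M where M: "\<And>z. z \<in> (\<lambda>p. h (fst p) (snd p)) ` ({-B..B} \<times> {a..b}) \<Longrightarrow> norm z \<le> M"
    using compact_imp_bounded bounded_iff by metis
  show ?thesis
  proof (intro exI allI impI)
    fix x y assume "\<bar>x\<bar> \<le> B" "y \<in> {a..b}"
    thus "\<bar>h x y\<bar> \<le> M" using M[of "h x y"] by force
  qed
qed

lemma continuous_on_Times_fst: "continuous_on S f \<Longrightarrow> continuous_on (S \<times> T) (\<lambda>p. f (fst p))"
  by (rule continuous_on_compose2[OF _ continuous_on_fst[OF continuous_on_id]]) auto

lemma continuous_on_Times_snd: "continuous_on T f \<Longrightarrow> continuous_on (S \<times> T) (\<lambda>p. f (snd p))"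
  by (rule continuous_on_compose2[OF _ continuous_on_snd[OF continuous_on_id]]) auto

lemma strip_slice_continuous:
  fixes h :: "real \<Rightarrow> real \<Rightarrow> real"
  assumes "continuous_on (UNIV \<times> {a..b}) (\<lambda>p. h (fst p) (snd p))"
  shows "continuous_on {a..b} (h x)"
  by (rule continuous_on_compose2[OF assms, of _ "\<lambda>y. (x, y)", simplified])
     (auto intro!: continuous_intros)

lemma strip_slice_integrable:
  fixes h :: "real \<Rightarrow> real \<Rightarrow> real"
  assumes "continuous_on (UNIV \<times> {a..b}) (\<lambda>p. h (fst p) (snd p))" "c \<in> {a..b}"
  shows "h x integrable_on {c..b}"
  using assms(2) by (intro integrable_continuous_interval continuous_on_subset[OF strip_slice_continuous[OF assms(1)]]) auto

lemma C1_local_lipschitz: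
  fixes f f' :: "real \<Rightarrow> real"
  assumes deriv: "\<And>x. (f has_real_derivative f' x) (at x)" and cont: "continuous_on UNIV f'"
  shows "\<exists>L. \<forall>x. \<bar>x - x0\<bar> \<le> 1 \<longrightarrow> \<bar>f x - f x0\<bar> \<le> L * \<bar>x - x0\<bar>"
proof -
  have "compact (f' ` {x0-1..x0+1})"
    by (intro compact_continuous_image continuous_on_subset[OF cont]) auto
  then obtain L where L: "\<And>z. z \<in> {x0-1..x0+1} \<Longrightarrow> norm (f' z) \<le> L"
    using compact_imp_bounded bounded_iff by (metis image_eqI)
  show ?thesis
  proof (intro exI allI impI)
    fix x assume "\<bar>x - x0\<bar> \<le> 1"
    hence "norm (f x - f x0) \<le> L * norm (x - x0)"
      by (intro field_differentiable_bound[of "{x0-1..x0+1}"])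
         (use L in \<open>auto intro: has_field_derivative_at_within deriv\<close>)
    thus "\<bar>f x - f x0\<bar> \<le> L * \<bar>x - x0\<bar>" by simp
  qed
qed


section \<open>The decreasing eigenfunction \<open>\<phi>\<^sub>\<lambda>\<close> of the Ornstein--Uhlenbeck generator\<close>

locale ou_resolvent =
  fixes \<theta> \<sigma> \<mu> lam :: real
  assumes theta_pos: "\<theta> > 0" and sigma_pos: "\<sigma> > 0" and mu_pos: "\<mu> > 0" and lam_pos: "lam > 0"
begin

text \<open>With \<open>a = \<lambda>/\<theta>\<close> and \<open>s = \<surd>(2\<theta>)/\<sigma>\<close> one has \<open>\<phi>\<^sub>\<lambda>(x) = \<Psi>\<^sub>a\<^sub>-\<^sub>1(s(x-\<mu>)) / \<Gamma>(a)\<close>;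
  \<open>dphi\<close> and \<open>ddphi\<close> are its first two derivatives.\<close>
definition "a = lam / \<theta>"
definition "s = sqrt (2 * \<theta>) / \<sigma>"
abbreviation "phi \<equiv> phiL \<theta> \<sigma> \<mu> lam"
definition "dphi x = - s / Gamma a * Psi a (s * (x - \<mu>))"
definition "ddphi x = s\<^sup>2 / Gamma a * Psi (a+1) (s * (x - \<mu>))"

lemma a_pos: "a > 0" using theta_pos lam_pos by (simp add: a_def)
lemma s_pos: "s > 0" using theta_pos sigma_pos by (simp add: s_def)
lemma Gamma_a_pos: "Gamma a > 0" using a_pos by (simp add: Gamma_real_pos)

lemma phi_eq_Psi: "phi x = Psi (a-1) (s * (x - \<mu>)) / Gamma a"
proof -
  have "((x - \<mu>) * sqrt (2 * \<theta>) / \<sigma>)\<^sup>2 / 4 = \<theta> * (x - \<mu>)\<^sup>2 / (2 * \<sigma>\<^sup>2)"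
    using theta_pos sigma_pos by (simp add: power_mult_distrib power_divide)
  hence "exp (\<theta> * (x - \<mu>)\<^sup>2 / (2 * \<sigma>\<^sup>2)) * exp (- ((x - \<mu>) * sqrt (2 * \<theta>) / \<sigma>)\<^sup>2 / 4) = 1"
    by (simp add: exp_add[symmetric])
  thus ?thesis
    unfolding phiL_def pcD_def Psi_def a_def s_def by (simp add: mult.commute)
qed

lemma phi_pos: "phi x > 0"
  unfolding phi_eq_Psi using Gamma_a_pos Psi_pos[of "a-1"] a_pos by simp

lemma dphi_neg: "dphi x < 0"
  unfolding dphi_def using Gamma_a_pos s_pos Psi_pos[of a] a_pos by simp

lemma ddphi_pos: "ddphi x > 0"
  unfolding ddphi_def using Gamma_a_pos s_pos Psi_pos[of "a+1"] a_pos by simp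

lemma phi_deriv: "(phi has_real_derivative dphi x) (at x)"
proof -
  have "((\<lambda>x. Psi (a-1) (s * (x - \<mu>)) / Gamma a) has_real_derivative
          - Psi (a - 1 + 1) (s * (x - \<mu>)) * (s * (1 - 0)) / Gamma a) (at x)"
    by (rule DERIV_cdivide, rule DERIV_chain2[OF Psi_deriv])
       (use a_pos in \<open>auto intro!: derivative_eq_intros\<close>)
  thus ?thesis unfolding phi_eq_Psi[abs_def] dphi_def by (simp add: algebra_simps)
qed

lemma dphi_deriv: "(dphi has_real_derivative ddphi x) (at x)"
proof -
  have "((\<lambda>x. - s / Gamma a * Psi a (s * (x - \<mu>))) has_real_derivative
          - s / Gamma a * (- Psi (a + 1) (s * (x - \<mu>)) * (s * (1 - 0)))) (at x)"
    by (rule DERIV_cmult, rule DERIV_chain2[OF Psi_deriv])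
       (use a_pos in \<open>auto intro!: derivative_eq_intros\<close>)
  thus ?thesis unfolding dphi_def[abs_def] ddphi_def by (simp add: algebra_simps power2_eq_square)
qed

lemma phi_cont: "continuous_on S phi"
  using DERIV_isCont[OF phi_deriv] by (blast intro: continuous_at_imp_continuous_on)

lemma dphi_cont: "continuous_on S dphi"
  using DERIV_isCont[OF dphi_deriv] by (blast intro: continuous_at_imp_continuous_on)

lemma ddphi_cont: "continuous_on S ddphi"
  unfolding ddphi_def using a_pos
  by (intro continuous_at_imp_continuous_on ballI continuous_intros
        continuous_on_compose2[OF continuous_at_imp_continuous_on[OF ballI[OF Psi_isCont]], of UNIV])
     auto

lemma deriv_phi: "deriv phi x = dphi x"
  by (rule DERIV_imp_deriv[OF phi_deriv])

text \<open>\<open>\<phi>\<^sub>\<lambda>\<close> solves \<open>L\<^sub>X \<phi> = \<lambda>\<phi>\<close>; this is \<open>Psi_recurrence\<close> after the change of variables.\<close>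
lemma phi_eigen: "\<sigma>\<^sup>2 / 2 * ddphi x + \<theta> * (\<mu> - x) * dphi x = lam * phi x"
proof -
  define z where "z = s * (x - \<mu>)"
  have rec: "a * Psi (a-1) z = Psi (a+1) z + z * Psi a z"
    using Psi_recurrence[OF a_pos, of z] by simp
  have "\<sigma>\<^sup>2 / 2 * s\<^sup>2 = \<theta>" using theta_pos sigma_pos by (simp add: s_def power_divide)
  moreover have "\<sigma>\<^sup>2 / 2 * ddphi x = (\<sigma>\<^sup>2 / 2 * s\<^sup>2) * Psi (a+1) z / Gamma a"
    unfolding ddphi_def z_def by simp
  moreover have "\<theta> * (\<mu> - x) * dphi x = \<theta> * (z * Psi a z) / Gamma a"
    unfolding dphi_def z_def using Gamma_a_pos by (simp add: field_simps)
  ultimately have "\<sigma>\<^sup>2 / 2 * ddphi x + \<theta> * (\<mu> - x) * dphi x = \<theta> * (Psi (a+1) z + z * Psi a z) / Gamma a"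
    by (simp add: add_divide_distrib distrib_left)
  also have "\<dots> = (\<theta> * a) * (Psi (a-1) z / Gamma a)" unfolding rec[symmetric] by simp
  also have "\<dots> = lam * phi x" using theta_pos by (simp add: a_def phi_eq_Psi z_def)
  finally show ?thesis .
qed

lemma phi_decreasing: "x < y \<Longrightarrow> phi y < phi x"
  using DERIV_neg_imp_decreasing[of x y phi] phi_deriv dphi_neg by blast

lemma dphi_increasing: "x < y \<Longrightarrow> dphi x < dphi y"
  using DERIV_pos_imp_increasing[of x y dphi] dphi_deriv ddphi_pos by blast

lemma phi_above_tangent: "x < y \<Longrightarrow> phi x + (y - x) * dphi x \<le> phi y"
proof -
  assume xy: "x < y"
  obtain z where z: "x < z" "z < y" "phi y - phi x = (y - x) * dphi z"
    using MVT2[OF xy, of phi dphi] phi_deriv by blast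
  have "(y - x) * dphi x \<le> (y - x) * dphi z"
    using dphi_increasing[OF z(1)] xy by (intro mult_left_mono) auto
  thus ?thesis using z(3) by simp
qed

text \<open>Far to the left of \<open>\<mu>\<close> the eigen equation forces \<open>\<phi>'' \<ge> 2\<lambda>\<phi>(y)/\<sigma>\<^sup>2 > 0\<close>.\<close>
lemma ddphi_lower_bound:
  assumes "x \<le> y" "y \<le> \<mu>"
  shows "2 * lam * phi y / \<sigma>\<^sup>2 \<le> ddphi x"
proof -
  have "\<theta> * (\<mu> - x) * dphi x \<le> 0"
    using assms theta_pos dphi_neg[of x] by (intro mult_nonneg_nonpos) auto
  moreover have "phi y \<le> phi x" using phi_decreasing[of x y] assms by (cases "x = y") auto
  ultimately have "lam * phi y \<le> \<sigma>\<^sup>2 / 2 * ddphi x"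
    using phi_eigen[of x] lam_pos by (smt (verit) mult_left_mono)
  thus ?thesis using sigma_pos by (simp add: field_simps)
qed

lemma dphi_unbounded_below: "\<exists>x<y. dphi x < - B"
proof -
  define y2 where "y2 = min y \<mu>"
  define m where "m = 2 * lam * phi y2 / \<sigma>\<^sup>2"
  have m_pos: "m > 0" unfolding m_def using lam_pos sigma_pos phi_pos[of y2] by simp
  define x where "x = y2 - (\<bar>B\<bar> + 1) / m"
  have x_y2: "x < y2" unfolding x_def using m_pos by simp
  obtain z where z: "x < z" "z < y2" "dphi y2 - dphi x = (y2 - x) * ddphi z"
    using MVT2[OF x_y2, of dphi ddphi] dphi_deriv by blast
  have "(y2 - x) * m \<le> (y2 - x) * ddphi z"
    using ddphi_lower_bound[of z y2] z x_y2 unfolding m_def y2_def by (intro mult_left_mono) auto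
  moreover have "(y2 - x) * m = \<bar>B\<bar> + 1" unfolding x_def using m_pos by simp
  ultimately have "dphi x < - B" using z(3) dphi_neg[of y2] by linarith
  moreover have "x < y" using x_y2 unfolding y2_def by simp
  ultimately show ?thesis by blast
qed

text \<open>The tangent line to \<open>\<phi>\<close> at a point far enough to the left of \<open>y\<close> is
  negative at \<open>y\<close>; this yields a sign change of the Wronskian below.\<close>
lemma phi_tangent_negative: "\<exists>x<y. phi x + (y - x) * dphi x < 0"
proof -
  obtain x where x: "x < y - 1" "dphi x < - phi (y - 1)"
    using dphi_unbounded_below by blast
  have "phi x + (y - x) * dphi x = phi x + (y - 1 - x) * dphi x + dphi x"
    by (simp add: algebra_simps)
  also have "\<dots> < 0" using phi_above_tangent[OF x(1)] x(2) by linarith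
  finally show ?thesis using x(1) by (intro exI[of _ x]) simp
qed

end

section \<open>The cost function \<open>\<Phi>\<close> and the free boundary \<open>\<beta>\<^sub>*\<close>\<close>

locale hjb_problem = ou_resolvent +
  fixes \<Phi> :: "real \<Rightarrow> real"
  assumes Phi_differentiable: "\<forall>x. \<Phi> differentiable at x"
    and dPhi_differentiable: "\<forall>x. deriv \<Phi> differentiable at x"
    and Phi_strictly_convex: "strictly_convex \<Phi>"
    and Phi_1: "\<Phi> 1 = 0"
    and k_pos: "\<forall>c\<in>{0..1}. kfun \<theta> lam \<Phi> c > 0"
begin

abbreviation "dPhi \<equiv> deriv \<Phi>"
abbreviation "k \<equiv> kfun \<theta> lam \<Phi>"
abbreviation "G \<equiv> Gfun \<theta> \<mu> lam \<Phi>"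
abbreviation "beta \<equiv> betaStar \<theta> \<sigma> \<mu> lam \<Phi>"

lemma Phi_deriv: "(\<Phi> has_real_derivative dPhi x) (at x)"
  using Phi_differentiable DERIV_deriv_iff_real_differentiable by blast

lemma dPhi_cont: "isCont dPhi x"
  using dPhi_differentiable differentiable_imp_continuous_within by blast

lemma Phi_convex: "convex_on UNIV \<Phi>"
  unfolding convex_on_def
proof (intro conjI ballI allI impI)
  fix x y u v :: real assume uv: "u \<ge> 0" "v \<ge> 0" "u + v = 1"
  show "\<Phi> (u *\<^sub>R x + v *\<^sub>R y) \<le> u * \<Phi> x + v * \<Phi> y"
  proof (cases "x = y \<or> v = 0 \<or> v = 1")
    case True
    moreover have "\<Phi> (u *\<^sub>R y + v *\<^sub>R y) = u * \<Phi> y + v * \<Phi> y"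
      using uv by (simp add: scaleR_left_distrib[symmetric] distrib_right[symmetric])
    ultimately show ?thesis using uv by auto
  next
    case False
    hence "\<Phi> ((1 - v) * x + v * y) < (1 - v) * \<Phi> x + v * \<Phi> y"
      using Phi_strictly_convex uv unfolding strictly_convex_def by auto
    moreover have "u = 1 - v" using uv by simp
    ultimately show ?thesis by simp
  qed
qed simp

text \<open>Strict convexity makes \<open>\<Phi>'\<close> strictly increasing: compare the midpoint value with
  the two tangent lines.\<close>
lemma dPhi_strict_mono: assumes "x < y" shows "dPhi x < dPhi y"
proof -
  define m where "m = (x + y) / 2"
  have "\<Phi> ((1 - 1/2) * x + (1/2) * y) < (1 - 1/2) * \<Phi> x + (1/2) * \<Phi> y"
    using Phi_strictly_convex[unfolded strictly_convex_def, rule_format, of x y "1/2"] assms by simp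
  hence mid: "\<Phi> m < (\<Phi> x + \<Phi> y) / 2" unfolding m_def by (simp add: field_simps)
  have t1: "\<Phi> m - \<Phi> x \<ge> dPhi x * (m - x)" and t2: "\<Phi> m - \<Phi> y \<ge> dPhi y * (m - y)"
    by (rule convex_on_imp_above_tangent[OF Phi_convex]; auto intro: Phi_deriv)+
  have "(dPhi x - dPhi y) * ((y - x)/2) = dPhi x * (m - x) + dPhi y * (m - y)"
    by (simp add: m_def field_simps)
  also have "\<dots> \<le> 2 * \<Phi> m - \<Phi> x - \<Phi> y" using t1 t2 by linarith
  also have "\<dots> < 0" using mid by simp
  finally have "(dPhi x - dPhi y) * ((y - x)/2) < 0" .
  thus ?thesis using assms by (simp add: mult_less_0_iff)
qed

lemma k_eq: "k c = lam + \<theta> + lam * dPhi c" by (simp add: kfun_def)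

lemma k_strict_mono: "x < y \<Longrightarrow> k x < k y"
  unfolding k_eq using dPhi_strict_mono[of x y] lam_pos by simp

lemma k_cont: "isCont k x"
  unfolding k_eq[abs_def] by (intro continuous_intros dPhi_cont)

lemma Phi_integral: "c \<le> 1 \<Longrightarrow> integral {c..1} dPhi = - \<Phi> c"
  using Phi_1 fundamental_theorem_of_calculus[of c 1 \<Phi> dPhi]
  by (auto simp: has_real_derivative_iff_has_vector_derivative[symmetric]
           intro!: integral_unique DERIV_subset[OF Phi_deriv])

text \<open>\<open>H(x,c) = G\<^sub>x \<phi> - G \<phi>'\<close> is the function whose unique root defines \<open>\<beta>\<^sub>*(c)\<close>;
  \<open>G_zero c\<close> is the root of the affine function \<open>G(\<cdot>,c)\<close>.\<close>
definition "H x c = k c / (lam + \<theta>) * phi x - G x c * dphi x"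
definition "G_zero c = \<mu> - (lam + \<theta>) * \<mu> * (k c - \<theta>) / (lam * k c)"

lemma G_eq: "G x c = \<mu> * (k c - \<theta>) / lam + k c * (x - \<mu>) / (lam + \<theta>)"
  by (simp add: Gfun_def)

lemma G_affine: assumes "k c \<noteq> 0" shows "G x c = k c / (lam + \<theta>) * (x - G_zero c)"
proof -
  have nz: "lam + \<theta> \<noteq> 0" "lam \<noteq> 0" using lam_pos theta_pos by auto
  have e: "k c / (lam + \<theta>) * ((lam + \<theta>) * \<mu> * (k c - \<theta>) / (lam * k c)) = \<mu> * (k c - \<theta>) / lam"
  proof -
    have "k c / (lam + \<theta>) * ((lam + \<theta>) * \<mu> * (k c - \<theta>) / (lam * k c))
       = (k c * (lam + \<theta>)) * (\<mu> * (k c - \<theta>)) / ((k c * (lam + \<theta>)) * lam)"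
      by (simp add: mult_ac)
    also have "\<dots> = \<mu> * (k c - \<theta>) / lam"
      by (rule mult_divide_mult_cancel_left) (use nz assms in simp)
    finally show ?thesis .
  qed
  have "k c / (lam + \<theta>) * (x - G_zero c) = k c * (x - \<mu>) / (lam + \<theta>) + k c / (lam + \<theta>) * ((lam + \<theta>) * \<mu> * (k c - \<theta>) / (lam * k c))"
    unfolding G_zero_def by (simp add: algebra_simps add_divide_distrib diff_divide_distrib)
  also have "\<dots> = G x c" unfolding e G_eq by simp
  finally show ?thesis by simp
qed

lemma G_deriv: "((\<lambda>x. G x c) has_real_derivative k c / (lam + \<theta>)) (at x)"
  unfolding G_eq using lam_pos theta_pos by (auto intro!: derivative_eq_intros)

text \<open>Using the eigen equation, \<open>\<partial>\<^sub>x H = -G \<phi>''\<close>.\<close>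
lemma H_deriv: "((\<lambda>x. H x c) has_real_derivative - G x c * ddphi x) (at x)"
  unfolding H_def[abs_def]
  by (rule DERIV_cong[OF DERIV_diff[OF DERIV_cmult[OF phi_deriv] DERIV_mult[OF G_deriv dphi_deriv]]])
     (simp add: algebra_simps)

lemma H_cont: "continuous_on S (\<lambda>x. H x c)"
  using DERIV_isCont[OF H_deriv] by (blast intro: continuous_at_imp_continuous_on)

lemma H_cont_c: "isCont (\<lambda>c. H x c) c"
  unfolding H_def G_eq by (intro continuous_intros k_cont) (use lam_pos theta_pos in auto)

lemma betaStar_eq: "beta c = (THE b. H b c = 0)"
proof -
  have "\<And>b. deriv (\<lambda>x. G x c) b * phi b - G b c * deriv phi b = H b c"
    unfolding H_def deriv_phi DERIV_imp_deriv[OF G_deriv] by simp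
  thus ?thesis unfolding betaStar_def by simp
qed

context
  fixes c assumes kc: "k c > 0"
begin

lemma H_pos_right: assumes "x \<ge> G_zero c" shows "H x c > 0"
proof -
  have "G x c \<ge> 0" unfolding G_affine[OF less_imp_neq[OF kc, symmetric]]
    using kc assms lam_pos theta_pos by simp
  hence "- G x c * dphi x \<ge> 0" using dphi_neg[of x] by (simp add: mult_nonneg_nonpos)
  moreover have "k c / (lam + \<theta>) * phi x > 0" using kc lam_pos theta_pos phi_pos[of x] by simp
  ultimately show ?thesis unfolding H_def by simp
qed

text \<open>Left of \<open>G_zero c\<close> we have \<open>G < 0\<close>, so \<open>\<partial>\<^sub>x H = -G\<phi>'' > 0\<close>.\<close>
lemma H_increasing: assumes "x < y" "y \<le> G_zero c" shows "H x c < H y c"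
proof -
  obtain z where z: "x < z" "z < y" "H y c - H x c = (y - x) * (- G z c * ddphi z)"
    using MVT2[OF assms(1), of "\<lambda>x. H x c" "\<lambda>x. - G x c * ddphi x"] H_deriv by blast
  have "k c * (z - G_zero c) < 0" using kc assms z by (intro mult_pos_neg) auto
  hence "G z c < 0" unfolding G_affine[OF less_imp_neq[OF kc, symmetric]]
    using lam_pos theta_pos by (simp add: divide_neg_pos)
  hence "(y - x) * (- G z c * ddphi z) > 0"
    using z ddphi_pos[of z] by (intro mult_pos_pos) (auto simp: mult_neg_pos)
  thus ?thesis using z(3) by simp
qed

lemma H_neg_exists: "\<exists>x. x < G_zero c \<and> H x c < 0"
proof -
  obtain x where x: "x < G_zero c" "phi x + (G_zero c - x) * dphi x < 0"
    using phi_tangent_negative by blast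
  define q where "q = k c / (lam + \<theta>)"
  have "H x c = q * (phi x + (G_zero c - x) * dphi x)"
    unfolding H_def G_affine[OF less_imp_neq[OF kc, symmetric]] q_def[symmetric]
    by (simp add: algebra_simps)
  also have "\<dots> < 0" using x(2) kc lam_pos theta_pos unfolding q_def by (intro mult_pos_neg) auto
  finally show ?thesis using x(1) by blast
qed

text \<open>Intermediate value theorem plus monotonicity: \<open>H(\<cdot>,c)\<close> has exactly one root.\<close>
lemma H_unique_root: "\<exists>!b. H b c = 0"
proof -
  obtain x0 where x0: "x0 < G_zero c" "H x0 c < 0" using H_neg_exists by blast
  have "\<exists>b\<ge>x0. b \<le> G_zero c \<and> H b c = 0"
    by (rule IVT'[of "\<lambda>x. H x c"]) (use x0 H_pos_right[of "G_zero c"] H_cont in auto)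
  then obtain b where b: "H b c = 0" by blast
  have left: "r < G_zero c" if "H r c = 0" for r
    using H_pos_right[of r] that by force
  show ?thesis
  proof (rule ex1I[of _ b])
    fix r assume r: "H r c = 0"
    show "r = b"
      using H_increasing[of r b] H_increasing[of b r] left[OF r] left[OF b] r b
      by (cases rule: linorder_cases[of r b]) auto
  qed (rule b)
qed

lemma beta_root: "H (beta c) c = 0"
  unfolding betaStar_eq by (rule theI'[OF H_unique_root])

lemma beta_lt_G_zero: "beta c < G_zero c"
  using H_pos_right[of "beta c"] beta_root by force

lemma H_neg_iff: "H x c < 0 \<longleftrightarrow> x < beta c"
  using H_increasing[of x "beta c"] H_increasing[of "beta c" x] H_pos_right[of x]
    beta_lt_G_zero beta_root
  by (cases rule: linorder_cases[of x "beta c"]; cases "x \<ge> G_zero c") auto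

lemma H_pos_iff: "H x c > 0 \<longleftrightarrow> x > beta c"
  using H_increasing[of x "beta c"] H_increasing[of "beta c" x] H_pos_right[of x]
    beta_lt_G_zero beta_root
  by (cases rule: linorder_cases[of x "beta c"]; cases "x \<ge> G_zero c") auto

lemma G_beta_neg: "G (beta c) c < 0"
  unfolding G_affine[OF less_imp_neq[OF kc, symmetric]]
  using beta_lt_G_zero kc lam_pos theta_pos by (intro mult_pos_neg) auto

text \<open>At \<open>x\<^sub>s = \<theta>\<mu>/k(c)\<close> the eigen equation gives \<open>H(x\<^sub>s,c) = k(c) \<sigma>\<^sup>2 \<phi>''(x\<^sub>s) / (2\<lambda>(\<lambda>+\<theta>)) > 0\<close>,
  hence \<open>\<beta>\<^sub>*(c) < x\<^sub>s\<close>.  This bounds the source term of the HJB equation.\<close>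
lemma k_beta_lt: "k c * beta c < \<theta> * \<mu>"
proof -
  define xs where "xs = \<theta> * \<mu> / k c"
  have kxs: "k c * xs = \<theta> * \<mu>" unfolding xs_def using kc by simp
  have "G xs c = \<theta> * (k c * (\<mu> - xs)) / (lam * (lam + \<theta>))"
  proof -
    have "G xs c = \<mu> * (k c - \<theta>) / lam + (\<theta> * \<mu> - k c * \<mu>) / (lam + \<theta>)"
      unfolding G_eq using kxs by (simp add: algebra_simps)
    also have "\<dots> = \<theta> * (\<mu> * k c - \<theta> * \<mu>) / (lam * (lam + \<theta>))"
      using lam_pos theta_pos by (simp add: field_simps)
    finally show ?thesis using kxs by (simp add: algebra_simps)
  qed
  hence "H xs c = k c / (lam * (lam + \<theta>)) * (lam * phi xs - \<theta> * (\<mu> - xs) * dphi xs)"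
  proof -
    assume g: "G xs c = \<theta> * (k c * (\<mu> - xs)) / (lam * (lam + \<theta>))"
    define q where "q = k c / (lam * (lam + \<theta>))"
    have q1: "k c / (lam + \<theta>) = q * lam" unfolding q_def using lam_pos by simp
    have q2: "G xs c = q * (\<theta> * (\<mu> - xs))" unfolding g q_def by simp
    show ?thesis unfolding H_def q1 q2 q_def[symmetric] by (simp add: algebra_simps)
  qed
  also have "lam * phi xs - \<theta> * (\<mu> - xs) * dphi xs = \<sigma>\<^sup>2 / 2 * ddphi xs"
    using phi_eigen[of xs] by simp
  finally have "H xs c > 0" using kc lam_pos theta_pos sigma_pos ddphi_pos[of xs] by simp
  hence "k c * beta c < k c * xs" using kc H_pos_iff by simp
  thus ?thesis using kxs by simp
qed

end

lemma k_positive: "c \<in> {0..1} \<Longrightarrow> k c > 0" using k_pos by blast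

text \<open>\<open>H(x,c)\<close> is \<open>k(c)\<close> times an expression that depends on \<open>c\<close> only through the
  term \<open>\<mu>\<theta>\<phi>'(x)/(\<lambda>k(c))\<close>, which is increasing in \<open>k(c)\<close> since \<open>\<phi>' < 0\<close>.\<close>
lemma H_scaled: assumes "k c > 0"
  shows "H x c = k c * (phi x / (lam + \<theta>) - (\<mu> / lam - \<mu> * \<theta> / (lam * k c) + (x - \<mu>) / (lam + \<theta>)) * dphi x)"
proof -
  have e: "k c * (\<mu> * \<theta> / (lam * k c)) = \<mu> * \<theta> / lam" using assms by simp
  have "k c * (\<mu> / lam - \<mu> * \<theta> / (lam * k c) + (x - \<mu>) / (lam + \<theta>))
      = k c * \<mu> / lam - k c * (\<mu> * \<theta> / (lam * k c)) + k c * (x - \<mu>) / (lam + \<theta>)"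
    by (simp add: algebra_simps)
  also have "\<dots> = k c * \<mu> / lam - \<mu> * \<theta> / lam + k c * (x - \<mu>) / (lam + \<theta>)" by (simp only: e)
  also have "\<dots> = G x c" unfolding G_eq by (simp add: algebra_simps diff_divide_distrib)
  finally have g: "G x c = k c * (\<mu> / lam - \<mu> * \<theta> / (lam * k c) + (x - \<mu>) / (lam + \<theta>))" by simp
  show ?thesis unfolding H_def g by (simp add: algebra_simps)
qed

lemma beta_strict_decreasing:
  assumes c: "c1 \<in> {0..1}" "c2 \<in> {0..1}" "c1 < c2"
  shows "beta c2 < beta c1"
proof -
  define x where "x = beta c1"
  have k1: "k c1 > 0" and k2: "k c2 > 0" using k_positive c by auto
  have k12: "k c1 < k c2" using k_strict_mono c by auto
  define R where "R \<kappa> = phi x / (lam + \<theta>) - (\<mu> / lam - \<mu> * \<theta> / (lam * \<kappa>) + (x - \<mu>) / (lam + \<theta>)) * dphi x" for \<kappa>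
  have "k c1 * R (k c1) = 0" using beta_root[OF k1] H_scaled[OF k1, of x] unfolding x_def R_def by simp
  hence R1: "R (k c1) = 0" using k1 by simp
  have d: "R (k c2) - R (k c1) = \<mu> * \<theta> / lam * ((1 / k c2 - 1 / k c1) * dphi x)"
    unfolding R_def by (simp add: algebra_simps)
  have "1 / k c2 - 1 / k c1 < 0" using k1 k12 by (simp add: frac_less2)
  hence "(1 / k c2 - 1 / k c1) * dphi x > 0" using dphi_neg[of x] by (rule mult_neg_neg)
  moreover have "\<mu> * \<theta> / lam > 0" using mu_pos theta_pos lam_pos by simp
  ultimately have "R (k c2) - R (k c1) > 0" unfolding d by (rule mult_pos_pos[rotated])
  hence "H x c2 > 0" using R1 H_scaled[OF k2, of x] k2 unfolding R_def by simp
  thus ?thesis using H_pos_iff[OF k2] unfolding x_def by simp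
qed

lemma beta_inj: "c1 \<in> {0..1} \<Longrightarrow> c2 \<in> {0..1} \<Longrightarrow> beta c1 = beta c2 \<Longrightarrow> c1 = c2"
  using beta_strict_decreasing[of c1 c2] beta_strict_decreasing[of c2 c1]
  by (cases rule: linorder_cases[of c1 c2]) auto

lemma beta_antimono: "c1 \<in> {0..1} \<Longrightarrow> c2 \<in> {0..1} \<Longrightarrow> c1 \<le> c2 \<Longrightarrow> beta c2 \<le> beta c1"
  using beta_strict_decreasing[of c1 c2] by (cases "c1 = c2") auto

text \<open>Continuity of \<open>\<beta>\<^sub>*\<close>: the sign of \<open>H(y,c)\<close> at a fixed \<open>y \<noteq> \<beta>\<^sub>*(c\<^sub>0)\<close> persists for
  \<open>c\<close> near \<open>c\<^sub>0\<close>, and this sign decides on which side of \<open>y\<close> the root \<open>\<beta>\<^sub>*(c)\<close> lies.\<close>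
lemma beta_cont: "continuous_on {0..1} beta"
  unfolding continuous_on_def
proof (intro ballI)
  fix c0 :: real assume c0: "c0 \<in> {0..1}"
  have H_tendsto: "((\<lambda>c. H y c) \<longlongrightarrow> H y c0) (at c0 within {0..1})" for y
    using H_cont_c[where x = y and c = c0] by (auto simp: isCont_def intro: tendsto_within_subset)
  have in01: "\<forall>\<^sub>F c in at c0 within {0..1}. c \<in> {0..1}" by (auto simp: eventually_at_filter)
  show "(beta \<longlongrightarrow> beta c0) (at c0 within {0..1})"
  proof (rule order_tendstoI)
    fix y assume "y < beta c0"
    hence "H y c0 < 0" using H_neg_iff k_positive c0 by blast
    hence "\<forall>\<^sub>F c in at c0 within {0..1}. H y c < 0" using H_tendsto by (rule order_tendstoD(2)[rotated])
    with in01 show "\<forall>\<^sub>F c in at c0 within {0..1}. y < beta c"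
      by eventually_elim (use H_neg_iff k_positive in blast)
  next
    fix y assume "y > beta c0"
    hence "H y c0 > 0" using H_pos_iff k_positive c0 by blast
    hence "\<forall>\<^sub>F c in at c0 within {0..1}. H y c > 0" using H_tendsto by (rule order_tendstoD(1)[rotated])
    with in01 show "\<forall>\<^sub>F c in at c0 within {0..1}. beta c < y"
      by eventually_elim (use H_pos_iff k_positive in blast)
  qed
qed

end

section \<open>The integrand \<open>u\<close> and its \<open>x\<close>-derivatives\<close>

context hjb_problem
begin

text \<open>For \<open>x > \<beta>\<^sub>*(c)\<close> the integrand is \<open>w(x,c) = G(x,c) - A(c) \<phi>(x)\<close>, where \<open>A(c)\<close> is
  chosen so that \<open>w(\<beta>\<^sub>*(c),c) = 0\<close>; \<open>w_x\<close> is its \<open>x\<close>-derivative and \<open>u_x\<close>, \<open>u_xx\<close>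
  are the (one-sided at \<open>\<beta>\<^sub>*\<close>) \<open>x\<close>-derivatives of \<open>u\<close>.\<close>
definition "A c = G (beta c) c / phi (beta c)"
definition "w x c = G x c - A c * phi x"
definition "w_x x c = k c / (lam + \<theta>) - A c * dphi x"
definition "u x c = (if x > beta c then w x c else 0)"
definition "u_x x c = max 0 (w_x x c)"
definition "u_xx x c = (if x > beta c then - A c * ddphi x else 0)"

lemma ufun_eq: "ufun \<theta> \<sigma> \<mu> lam \<Phi> x c = u x c"
  unfolding ufun_def u_def w_def A_def Let_def by simp

lemma A_neg: "c \<in> {0..1} \<Longrightarrow> A c < 0"
  unfolding A_def using G_beta_neg[OF k_positive] phi_pos by (simp add: divide_neg_pos)

lemma w_deriv: "((\<lambda>x. w x c) has_real_derivative w_x x c) (at x)"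
  unfolding w_def[abs_def] w_x_def by (intro DERIV_diff DERIV_cmult G_deriv phi_deriv)

lemma w_x_deriv: "((\<lambda>x. w_x x c) has_real_derivative - A c * ddphi x) (at x)"
  unfolding w_x_def[abs_def] using DERIV_diff[OF DERIV_const DERIV_cmult[OF dphi_deriv]] by simp

context fixes c :: real assumes c01: "c \<in> {0..1}"
begin

text \<open>Smooth fit: the root condition \<open>H(\<beta>\<^sub>*(c),c) = 0\<close> says exactly that \<open>w_x\<close> vanishes
  at \<open>\<beta>\<^sub>*(c)\<close>, so \<open>u(\<cdot>,c)\<close> is \<open>C\<^sup>1\<close> across the free boundary.\<close>
lemma w_x_beta: "w_x (beta c) c = 0"
proof -
  have "w_x (beta c) c = H (beta c) c / phi (beta c)"
    unfolding w_x_def A_def H_def using phi_pos[of "beta c"] by (simp add: field_simps)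
  thus ?thesis using beta_root[OF k_positive[OF c01]] by simp
qed

lemma w_beta: "w (beta c) c = 0"
  unfolding w_def A_def using phi_pos[of "beta c"] by simp

lemma w_x_increasing: assumes "x < y" shows "w_x x c < w_x y c"
proof -
  obtain z where z: "x < z" "z < y" "w_x y c - w_x x c = (y - x) * (- A c * ddphi z)"
    using MVT2[OF assms, of "\<lambda>x. w_x x c" "\<lambda>x. - A c * ddphi x"] w_x_deriv by blast
  have "- A c * ddphi z > 0" using A_neg[OF c01] ddphi_pos[of z] by (simp add: mult_neg_pos)
  with assms have "(y - x) * (- A c * ddphi z) > 0" by (simp add: mult_pos_neg)
  thus ?thesis using z by simp
qed

lemma w_x_pos: "x > beta c \<Longrightarrow> w_x x c > 0"
  using w_x_increasing[of "beta c" x] w_x_beta by simp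

lemma w_x_neg: "x < beta c \<Longrightarrow> w_x x c < 0"
  using w_x_increasing[of x "beta c"] w_x_beta by simp

lemma w_pos: assumes "x > beta c" shows "w x c > 0"
proof -
  obtain z where z: "beta c < z" "z < x" "w x c - w (beta c) c = (x - beta c) * w_x z c"
    using MVT2[OF assms, of "\<lambda>x. w x c" "\<lambda>x. w_x x c"] w_deriv by blast
  have "(x - beta c) * w_x z c > 0" using assms w_x_pos[OF z(1)] by simp
  thus ?thesis using z w_beta by simp
qed

lemma u_x_eq: "u_x x c = (if x > beta c then w_x x c else 0)"
  unfolding u_x_def using w_x_pos[of x] w_x_neg[of x] w_x_beta
  by (cases rule: linorder_cases[of x "beta c"]) auto

text \<open>\<open>u(\<cdot>,c)\<close> is differentiable everywhere; at the free boundary both one-sided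
  difference quotients are dominated by those of \<open>w\<close>, whose derivative there is 0.\<close>
lemma u_deriv: "((\<lambda>x. u x c) has_real_derivative u_x x c) (at x)"
proof (cases rule: linorder_cases[of x "beta c"])
  case less
  hence zero: "u_x x c = 0" by (simp add: u_x_eq)
  show ?thesis unfolding zero
    by (rule has_field_derivative_transform_within_open[OF DERIV_const, where S = "{..<beta c}"])
       (use less in \<open>auto simp: u_def u_x_eq\<close>)
next
  case greater
  hence eq: "u_x x c = w_x x c" by (simp add: u_x_eq)
  show ?thesis unfolding eq
    by (rule has_field_derivative_transform_within_open[OF w_deriv, where S = "{beta c<..}"])
       (use greater in \<open>auto simp: u_def u_x_eq\<close>)
next
  case equal
  have "((\<lambda>z. (w z c - w (beta c) c) / (z - beta c)) \<longlongrightarrow> 0) (at (beta c))"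
    using w_deriv[of c "beta c"] w_x_beta by (simp add: has_field_derivative_iff)
  hence "((\<lambda>z. (u z c - u (beta c) c) / (z - beta c)) \<longlongrightarrow> 0) (at (beta c))"
    by (rule metric_tendsto_imp_tendsto)
       (auto intro!: always_eventually simp: u_def w_beta abs_divide divide_right_mono)
  thus ?thesis using equal by (simp add: has_field_derivative_iff u_x_eq)
qed

lemma u_x_deriv: assumes "x \<noteq> beta c" shows "((\<lambda>x. u_x x c) has_real_derivative u_xx x c) (at x)"
proof (cases "x < beta c")
  case True
  hence zero: "u_xx x c = 0" by (simp add: u_xx_def)
  show ?thesis unfolding zero
    by (rule has_field_derivative_transform_within_open[OF DERIV_const, where S = "{..<beta c}"])
       (use True in \<open>auto simp: u_x_eq u_xx_def\<close>)
next
  case False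
  hence gt: "x > beta c" using assms by simp
  hence eq: "u_xx x c = - A c * ddphi x" by (simp add: u_xx_def)
  show ?thesis unfolding eq
    by (rule has_field_derivative_transform_within_open[OF w_x_deriv, where S = "{beta c<..}"])
       (use gt in \<open>auto simp: u_x_eq\<close>)
qed

end

lemma A_cont: "continuous_on {0..1} A"
proof -
  have "continuous_on {0..1} (\<lambda>c. G (beta c) c)"
    unfolding G_eq using lam_pos theta_pos
    by (intro continuous_intros beta_cont continuous_at_imp_continuous_on ballI k_cont) auto
  moreover have "continuous_on {0..1} (\<lambda>c. phi (beta c))"
    by (rule continuous_on_compose2[OF phi_cont beta_cont]) auto
  ultimately show ?thesis unfolding A_def[abs_def]
    by (intro continuous_intros) (auto simp: phi_pos less_imp_neq[OF phi_pos, symmetric])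
qed

end


section \<open>Regularity of \<open>F\<close>\<close>

context hjb_problem
begin

abbreviation "strip \<equiv> UNIV \<times> {0..(1::real)}"
abbreviation "F \<equiv> Ffun \<theta> \<sigma> \<mu> lam \<Phi>"

definition "F_x x c = (1 - c) - integral {c..1} (\<lambda>y. u_x x y)"
definition "F_xx x c = - integral {c..1} (\<lambda>y. u_xx x y)"
definition "F_c x c = - x + u x c"

lemma F_eq: "F x c = x * (1 - c) - integral {c..1} (\<lambda>y. u x y)"
  unfolding Ffun_def ufun_eq by simp

lemma k_cont_on: "continuous_on S k"
  using k_cont by (blast intro: continuous_at_imp_continuous_on)

lemma w_x_cont: "continuous_on strip (\<lambda>p. w_x (fst p) (snd p))"
  unfolding w_x_def using lam_pos theta_pos
  by (intro continuous_intros continuous_on_Times_fst continuous_on_Times_snd A_cont k_cont_on dphi_cont) auto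

lemma u_x_cont: "continuous_on strip (\<lambda>p. u_x (fst p) (snd p))"
  unfolding u_x_def by (intro continuous_on_max continuous_on_const w_x_cont)

text \<open>\<open>u\<close> is jointly continuous: it is glued from \<open>0\<close> and \<open>w\<close> along the continuous
  curve \<open>x = \<beta>\<^sub>*(c)\<close>, on which \<open>w\<close> vanishes.\<close>
lemma u_cont: "continuous_on strip (\<lambda>p. u (fst p) (snd p))"
proof -
  have w_cont: "continuous_on strip (\<lambda>p. w (fst p) (snd p))"
    unfolding w_def G_eq using lam_pos theta_pos
    by (intro continuous_intros continuous_on_Times_fst continuous_on_Times_snd A_cont k_cont_on phi_cont)
       auto
  have "continuous_on strip (\<lambda>p. if fst p - beta (snd p) \<le> 0 then 0 else w (fst p) (snd p))"
  proof (rule continuous_on_cases_le)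
    show "continuous_on {p \<in> strip. 0 \<le> fst p - beta (snd p)} (\<lambda>p. w (fst p) (snd p))"
      by (rule continuous_on_subset[OF w_cont]) auto
    show "continuous_on strip (\<lambda>p. fst p - beta (snd p))"
      by (intro continuous_intros continuous_on_Times_snd beta_cont)
    fix p assume "p \<in> strip" "fst p - beta (snd p) = 0"
    thus "0 = w (fst p) (snd p)" using w_beta[of "snd p"] by (auto simp: mem_Times_iff)
  qed (rule continuous_on_const)
  moreover have "(\<lambda>p. if fst p - beta (snd p) \<le> 0 then 0 else w (fst p) (snd p)) = (\<lambda>p. u (fst p) (snd p))"
    by (auto simp: u_def fun_eq_iff)
  ultimately show ?thesis by metis
qed

text \<open>\<open>u_x(\<cdot>,y)\<close> is Lipschitz near \<open>x0\<close>, uniformly in \<open>y \<in> [0,1]\<close>: it is the positive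
  part of \<open>w_x = k/(\<lambda>+\<theta>) - A \<phi>'\<close>, with \<open>A\<close> bounded and \<open>\<phi>'\<close> locally Lipschitz.\<close>
lemma u_x_lipschitz:
  "\<exists>L. \<forall>x y. y \<in> {0..1} \<longrightarrow> \<bar>x - x0\<bar> \<le> 1 \<longrightarrow> \<bar>u_x x y - u_x x0 y\<bar> \<le> L * \<bar>x - x0\<bar>"
proof -
  have "compact (A ` {0..1})" by (rule compact_continuous_image[OF A_cont compact_Icc])
  then obtain M where "\<And>z. z \<in> A ` {0..1} \<Longrightarrow> norm z \<le> M"
    using compact_imp_bounded bounded_iff by metis
  hence M: "\<And>y. y \<in> {0..1} \<Longrightarrow> \<bar>A y\<bar> \<le> M" by auto
  obtain L where L: "\<And>x. \<bar>x - x0\<bar> \<le> 1 \<Longrightarrow> \<bar>dphi x - dphi x0\<bar> \<le> L * \<bar>x - x0\<bar>"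
    using C1_local_lipschitz[OF dphi_deriv ddphi_cont] by blast
  show ?thesis
  proof (intro exI allI impI)
    fix x y :: real assume y: "y \<in> {0..1}" and x: "\<bar>x - x0\<bar> \<le> 1"
    have "\<bar>u_x x y - u_x x0 y\<bar> \<le> \<bar>w_x x y - w_x x0 y\<bar>" unfolding u_x_def by linarith
    also have "\<dots> = \<bar>A y\<bar> * \<bar>dphi x - dphi x0\<bar>" unfolding w_x_def by (simp add: algebra_simps abs_mult[symmetric])
    also have "\<dots> \<le> M * (L * \<bar>x - x0\<bar>)"
      by (rule mult_mono) (use M[OF y] L[OF x] in auto)
    finally show "\<bar>u_x x y - u_x x0 y\<bar> \<le> (M * L) * \<bar>x - x0\<bar>" by (simp add: mult.assoc)
  qed
qed

text \<open>\<open>u_xx(\<cdot>,y)\<close> jumps only at \<open>\<beta>\<^sub>*(y)\<close>, and \<open>\<beta>\<^sub>*\<close> is injective, so for fixed \<open>x\<close> only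
  one \<open>y\<close> can be exceptional.\<close>
lemma beta_level_finite: "finite {y \<in> {0..1}. beta y = x}"
proof -
  have "{y \<in> {0..1}. beta y = x} \<subseteq> {SOME y. y \<in> {0..1} \<and> beta y = x}"
    using beta_inj by (auto intro: someI2)
  thus ?thesis by (rule finite_subset) simp
qed

lemma u_xx_isCont: assumes "x0 \<noteq> beta y" shows "isCont (\<lambda>x. u_xx x y) x0"
proof (cases "x0 < beta y")
  case True
  have "\<forall>\<^sub>F x in nhds x0. x < beta y" using eventually_nhds_in_open[of "{..<beta y}" x0] True by simp
  hence "\<forall>\<^sub>F x in nhds x0. u_xx x y = 0" by eventually_elim (simp add: u_xx_def)
  thus ?thesis using isCont_cong by fastforce
next
  case False
  hence "x0 > beta y" using assms by simp
  hence "\<forall>\<^sub>F x in nhds x0. x > beta y" using eventually_nhds_in_open[of "{beta y<..}" x0] by simp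
  hence ev: "\<forall>\<^sub>F x in nhds x0. u_xx x y = - A y * ddphi x" by eventually_elim (simp add: u_xx_def)
  have "isCont (\<lambda>x. - A y * ddphi x) x0"
    using ddphi_cont[of UNIV] by (intro continuous_intros) (simp add: continuous_on_eq_continuous_at)
  thus ?thesis using isCont_cong[OF ev] by simp
qed

context fixes c :: real assumes c01: "c \<in> {0..1}"
begin

text \<open>\<open>F_x\<close>: the Leibniz rule applies since \<open>u_x\<close> is jointly continuous.\<close>
lemma F_has_x_derivative: "((\<lambda>x. F x c) has_real_derivative F_x x0 c) (at x0)"
proof -
  have "((\<lambda>x. integral (cbox c 1) (\<lambda>y. u x y)) has_field_derivative
          integral (cbox c 1) (\<lambda>y. u_x x0 y)) (at x0 within UNIV)"
  proof (rule leibniz_rule_field_derivative)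
    fix x t assume "t \<in> cbox c (1::real)"
    hence "t \<in> {0..1}" using c01 by auto
    thus "((\<lambda>x. u x t) has_field_derivative u_x x t) (at x within UNIV)" using u_deriv by simp
  next
    fix x show "(\<lambda>y. u x y) integrable_on cbox c 1" using strip_slice_integrable[OF u_cont c01] by simp
  next
    have "continuous_on (UNIV \<times> cbox c 1) (\<lambda>p. u_x (fst p) (snd p))"
      by (rule continuous_on_subset[OF u_x_cont]) (use c01 in auto)
    thus "continuous_on (UNIV \<times> cbox c 1) (\<lambda>(x, t). u_x x t)" by (simp add: case_prod_beta')
  qed auto
  hence "((\<lambda>x. x * (1 - c) - integral {c..1} (\<lambda>y. u x y)) has_real_derivative
          1 * (1 - c) - integral {c..1} (\<lambda>y. u_x x0 y)) (at x0)"
    by (intro DERIV_diff DERIV_cmult_right DERIV_ident) simp_all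
  thus ?thesis unfolding F_eq[abs_def] F_x_def by simp
qed

text \<open>\<open>F_xx\<close>: differentiate under the integral with the Lipschitz bound of
  \<open>u_x_lipschitz\<close>, the exceptional set being \<open>{y. \<beta>\<^sub>*(y) = x0}\<close>.\<close>
lemma u_xx_integrable_and_F_x_deriv:
  "(\<lambda>y. u_xx x0 y) integrable_on {c..1} \<and> ((\<lambda>x. F_x x c) has_real_derivative F_xx x0 c) (at x0)"
proof -
  obtain L where L: "\<And>x y. y \<in> {0..1} \<Longrightarrow> \<bar>x - x0\<bar> \<le> 1 \<Longrightarrow> \<bar>u_x x y - u_x x0 y\<bar> \<le> L * \<bar>x - x0\<bar>"
    using u_x_lipschitz by blast
  have int: "\<And>x. (\<lambda>y. u_x x y) integrable_on {c..1}" by (rule strip_slice_integrable[OF u_x_cont c01])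
  have der: "((\<lambda>x. u_x x y) has_real_derivative u_xx x0 y) (at x0)"
    if "y \<in> {c..1}" "y \<notin> {y \<in> {0..1}. beta y = x0}" for y
    using that c01 by (intro u_x_deriv) auto
  have lip: "\<bar>u_x x y - u_x x0 y\<bar> \<le> L * \<bar>x - x0\<bar>" if "y \<in> {c..1}" "\<bar>x - x0\<bar> \<le> 1" for x y
    using that L c01 by auto
  note D = parametric_integral_has_derivative[OF int beta_level_finite der lip]
  have "((\<lambda>x. (1 - c) - integral {c..1} (\<lambda>y. u_x x y)) has_real_derivative
          0 - integral {c..1} (\<lambda>y. u_xx x0 y)) (at x0)"
    using D(2) by (intro DERIV_diff DERIV_const) simp_all
  thus ?thesis using D(1) unfolding F_x_def[abs_def] F_xx_def by simp
qed

text \<open>\<open>F_c\<close>: fundamental theorem of calculus in the lower limit.\<close>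
lemma F_has_c_derivative: "((\<lambda>d. F x d) has_real_derivative F_c x c) (at c within {0..1})"
proof -
  have cu: "continuous_on {0..1} (\<lambda>y. u x y)" by (rule strip_slice_continuous[OF u_cont])
  have "((\<lambda>d. x * (1 - d) - (integral {0..1} (\<lambda>y. u x y) - integral {0..d} (\<lambda>y. u x y)))
          has_real_derivative x * (0 - 1) - (0 - u x c)) (at c within {0..1})"
    by (intro DERIV_diff DERIV_cmult DERIV_const DERIV_ident integral_has_real_derivative[OF cu c01])
  hence "((\<lambda>d. x * (1 - d) - (integral {0..1} (\<lambda>y. u x y) - integral {0..d} (\<lambda>y. u x y)))
          has_real_derivative F_c x c) (at c within {0..1})" by (simp add: F_c_def)
  thus ?thesis
  proof (rule has_field_derivative_transform_within[OF _ zero_less_one c01])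
    fix d :: real assume d: "d \<in> {0..1}"
    have "integral {0..d} (\<lambda>y. u x y) + integral {d..1} (\<lambda>y. u x y) = integral {0..1} (\<lambda>y. u x y)"
      using Henstock_Kurzweil_Integration.integral_combine[of 0 d 1 "\<lambda>y. u x y",
            OF _ _ integrable_continuous_interval[OF cu]] d by simp
    thus "x * (1 - d) - (integral {0..1} (\<lambda>y. u x y) - integral {0..d} (\<lambda>y. u x y)) = F x d"
      unfolding F_eq by simp
  qed
qed

end

lemma u_xx_integrable: "c \<in> {0..1} \<Longrightarrow> (\<lambda>y. u_xx x y) integrable_on {c..1}"
  using u_xx_integrable_and_F_x_deriv by blast

lemma F_cont: "continuous_on strip (\<lambda>(x, c). F x c)"
proof -
  have "continuous_on strip (\<lambda>p. integral {snd p..1} (\<lambda>y. u (fst p) y))"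
  proof (rule parametric_tail_integral_continuous[where N = "\<lambda>_. {}"])
    show "\<And>x c. c \<in> {0..1} \<Longrightarrow> (\<lambda>y. u x y) integrable_on {c..1}"
      by (rule strip_slice_integrable[OF u_cont])
    show "\<And>B. \<exists>M. \<forall>x y. \<bar>x\<bar> \<le> B \<longrightarrow> y \<in> {0..1} \<longrightarrow> \<bar>u x y\<bar> \<le> M"
      by (rule continuous_on_strip_bounded[OF u_cont])
    show "\<And>x y. y \<in> {0..1} \<Longrightarrow> y \<notin> {} \<Longrightarrow> isCont (\<lambda>x. u x y) x"
      using u_deriv DERIV_isCont by blast
  qed simp
  hence "continuous_on strip (\<lambda>p. fst p * (1 - snd p) - integral {snd p..1} (\<lambda>y. u (fst p) y))"
    by (intro continuous_intros)
  thus ?thesis by (simp add: case_prod_beta' F_eq)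
qed

lemma F_x_cont: "continuous_on strip (\<lambda>(x, c). F_x x c)"
proof -
  have "continuous_on strip (\<lambda>p. integral {snd p..1} (\<lambda>y. u_x (fst p) y))"
  proof (rule parametric_tail_integral_continuous[where N = "\<lambda>_. {}"])
    show "\<And>x c. c \<in> {0..1} \<Longrightarrow> (\<lambda>y. u_x x y) integrable_on {c..1}"
      by (rule strip_slice_integrable[OF u_x_cont])
    show "\<And>B. \<exists>M. \<forall>x y. \<bar>x\<bar> \<le> B \<longrightarrow> y \<in> {0..1} \<longrightarrow> \<bar>u_x x y\<bar> \<le> M"
      by (rule continuous_on_strip_bounded[OF u_x_cont])
    show "\<And>x y. y \<in> {0..1} \<Longrightarrow> y \<notin> {} \<Longrightarrow> isCont (\<lambda>x. u_x x y) x"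
      unfolding u_x_def using w_x_deriv DERIV_isCont by (intro continuous_intros) blast
  qed simp
  hence "continuous_on strip (\<lambda>p. (1 - snd p) - integral {snd p..1} (\<lambda>y. u_x (fst p) y))"
    by (intro continuous_intros)
  thus ?thesis by (simp add: case_prod_beta' F_x_def)
qed

lemma F_xx_cont: "continuous_on strip (\<lambda>(x, c). F_xx x c)"
proof -
  have "continuous_on strip (\<lambda>p. integral {snd p..1} (\<lambda>y. u_xx (fst p) y))"
  proof (rule parametric_tail_integral_continuous[where N = "\<lambda>x. {y \<in> {0..1}. beta y = x}"])
    show "\<And>x c. c \<in> {0..1} \<Longrightarrow> (\<lambda>y. u_xx x y) integrable_on {c..1}" by (rule u_xx_integrable)
    show "\<And>x. finite {y \<in> {0..1}. beta y = x}" by (rule beta_level_finite)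
    show "\<And>x y. y \<in> {0..1} \<Longrightarrow> y \<notin> {y \<in> {0..1}. beta y = x} \<Longrightarrow> isCont (\<lambda>x. u_xx x y) x"
      using u_xx_isCont by auto
    fix B
    have "continuous_on strip (\<lambda>p. - A (snd p) * ddphi (fst p))"
      by (intro continuous_intros continuous_on_Times_fst continuous_on_Times_snd A_cont ddphi_cont)
    then obtain M where M: "\<And>x y. \<bar>x\<bar> \<le> B \<Longrightarrow> y \<in> {0..1} \<Longrightarrow> \<bar>- A y * ddphi x\<bar> \<le> M"
      using continuous_on_strip_bounded[where h = "\<lambda>x y. - A y * ddphi x"] by blast
    show "\<exists>M. \<forall>x y. \<bar>x\<bar> \<le> B \<longrightarrow> y \<in> {0..1} \<longrightarrow> \<bar>u_xx x y\<bar> \<le> M"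
    proof (intro exI allI impI)
      fix x y :: real assume "\<bar>x\<bar> \<le> B" "y \<in> {0..1}"
      hence "\<bar>- A y * ddphi x\<bar> \<le> M" by (rule M)
      hence "0 \<le> M" "\<bar>- A y * ddphi x\<bar> \<le> M" by (auto intro: order_trans[OF abs_ge_zero])
      thus "\<bar>u_xx x y\<bar> \<le> M" unfolding u_xx_def by simp
    qed
  qed
  hence "continuous_on strip (\<lambda>p. - integral {snd p..1} (\<lambda>y. u_xx (fst p) y))"
    by (intro continuous_intros)
  thus ?thesis by (simp add: case_prod_beta' F_xx_def)
qed

lemma F_c_cont: "continuous_on strip (\<lambda>(x, c). F_c x c)"
  using u_cont unfolding F_c_def case_prod_beta' by (intro continuous_intros)

end


section \<open>The variational inequality\<close>

context hjb_problem
begin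

text \<open>Right of the free boundary each integrand solves \<open>(L\<^sub>X - \<lambda>) u(\<cdot>,y) = \<theta>\<mu> - k(y) x\<close>:
  the \<open>\<phi>\<close>-part is annihilated by the eigen equation, and \<open>G\<close> is the affine particular solution.\<close>
lemma u_generator_identity:
  assumes y: "y \<in> {0..1}" and xb: "x > beta y"
  shows "\<sigma>\<^sup>2 / 2 * u_xx x y + \<theta> * (\<mu> - x) * u_x x y - lam * u x y = \<theta> * \<mu> - k y * x"
proof -
  have G_part: "\<theta> * (\<mu> - x) * (k y / (lam + \<theta>)) - lam * G x y = \<theta> * \<mu> - k y * x"
  proof -
    define r where "r = lam / (lam + \<theta>)"
    define s where "s = \<theta> / (lam + \<theta>)"
    have rs: "r + s = 1" unfolding r_def s_def using lam_pos theta_pos by (simp add: add_divide_distrib[symmetric])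
    have "lam * G x y = \<mu> * (k y - \<theta>) + r * k y * (x - \<mu>)"
      unfolding G_eq r_def using lam_pos by (simp add: distrib_left)
    moreover have "\<theta> * (\<mu> - x) * (k y / (lam + \<theta>)) = s * k y * (\<mu> - x)" unfolding s_def by simp
    ultimately have "\<theta> * (\<mu> - x) * (k y / (lam + \<theta>)) - lam * G x y
       = (r + s) * k y * (\<mu> - x) - \<mu> * (k y - \<theta>)" by (simp add: algebra_simps)
    thus ?thesis unfolding rs by (simp add: algebra_simps)
  qed
  have "\<sigma>\<^sup>2 / 2 * u_xx x y + \<theta> * (\<mu> - x) * u_x x y - lam * u x y
     = - A y * (\<sigma>\<^sup>2 / 2 * ddphi x + \<theta> * (\<mu> - x) * dphi x - lam * phi x)
       + (\<theta> * (\<mu> - x) * (k y / (lam + \<theta>)) - lam * G x y)"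
    using xb u_x_eq[OF y] by (simp add: u_xx_def u_def w_def w_x_def algebra_simps)
  also have "\<dots> = \<theta> * \<mu> - k y * x" unfolding G_part using phi_eigen[of x] by simp
  finally show ?thesis .
qed

text \<open>The source term obtained after integrating the HJB operator in \<open>y\<close>.\<close>
definition "source x y = (if x > beta y then 0 else k y * x - \<theta> * \<mu>)"

lemma source_nonpos: assumes "y \<in> {0..1}" shows "source x y \<le> 0"
proof (cases "x > beta y")
  case False
  have ky: "k y > 0" using k_positive assms .
  hence "k y * x \<le> k y * beta y" using False by simp
  thus ?thesis using k_beta_lt[OF ky] False by (simp add: source_def)
qed (simp add: source_def)

lemma integral_k_affine:
  assumes "c \<le> 1"
  shows "integral {c..1} (\<lambda>y. k y * x - \<theta> * \<mu>) = (1 - c) * ((lam + \<theta>) * x - \<theta> * \<mu>) - lam * x * \<Phi> c"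
proof -
  define C where "C = (lam + \<theta>) * x - \<theta> * \<mu>"
  have dPhi_int: "(\<lambda>y. lam * x * dPhi y) integrable_on {c..1}"
    by (intro integrable_on_mult_right integrable_continuous_interval continuous_at_imp_continuous_on
          ballI dPhi_cont)
  have "(\<lambda>y. k y * x - \<theta> * \<mu>) = (\<lambda>y. C + lam * x * dPhi y)"
    unfolding k_eq C_def by (simp add: fun_eq_iff algebra_simps)
  hence "integral {c..1} (\<lambda>y. k y * x - \<theta> * \<mu>) = (1 - c) * C + lam * x * integral {c..1} dPhi"
    using assms integral_add[OF integrable_const_ivl dPhi_int] by simp
  thus ?thesis using Phi_integral[OF assms] by (simp add: C_def)
qed

text \<open>Integrating \<open>u_generator_identity\<close> over \<open>y \<in> [c,1]\<close>: the first expression of the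
  HJB equation equals \<open>\<integral>\<^sub>c\<^sup>1 source(x,y) dy\<close>.\<close>
lemma hjb_operator_integral:
  assumes c: "c \<in> {0..1}"
  shows "- (\<sigma>\<^sup>2 / 2 * F_xx x c + \<theta> * (\<mu> - x) * F_x x c) + lam * F x c - lam * x * \<Phi> c
         = integral {c..1} (source x)"
proof -
  have c_le_1: "c \<le> 1" using c by simp
  define W where "W y = \<sigma>\<^sup>2 / 2 * u_xx x y + \<theta> * (\<mu> - x) * u_x x y - lam * u x y" for y
  have i0: "(\<lambda>y. u x y) integrable_on {c..1}" by (rule strip_slice_integrable[OF u_cont c])
  have i1: "(\<lambda>y. u_x x y) integrable_on {c..1}" by (rule strip_slice_integrable[OF u_x_cont c])
  have i2: "(\<lambda>y. u_xx x y) integrable_on {c..1}" by (rule u_xx_integrable[OF c])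
  have iW: "W integrable_on {c..1}" and intW: "integral {c..1} W =
      \<sigma>\<^sup>2 / 2 * integral {c..1} (\<lambda>y. u_xx x y) + \<theta> * (\<mu> - x) * integral {c..1} (\<lambda>y. u_x x y)
      - lam * integral {c..1} (\<lambda>y. u x y)"
    unfolding W_def using i0 i1 i2
    by (simp_all add: integral_diff integral_add integrable_diff integrable_add integrable_on_mult_right)
  have iQ: "(\<lambda>y. k y * x - \<theta> * \<mu>) integrable_on {c..1}"
    by (intro integrable_continuous_interval continuous_intros k_cont_on)
  have split: "source x y = W y + (k y * x - \<theta> * \<mu>)" if "y \<in> {c..1}" for y
  proof -
    have y: "y \<in> {0..1}" using that c by auto
    show ?thesis
      using u_generator_identity[OF y] by (simp add: source_def W_def u_xx_def u_x_eq[OF y] u_def)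
  qed
  have "integral {c..1} (source x) = integral {c..1} W + integral {c..1} (\<lambda>y. k y * x - \<theta> * \<mu>)"
    using integral_cong[of "{c..1}" "source x" "\<lambda>y. W y + (k y * x - \<theta> * \<mu>)"] split
      integral_add[OF iW iQ] by simp
  thus ?thesis
    using c unfolding intW integral_k_affine[of c x, OF c_le_1] F_xx_def F_x_def F_eq
    by (simp add: algebra_simps)
qed

text \<open>Right of \<open>\<beta>\<^sub>*(c)\<close> the source vanishes on \<open>[c,1]\<close> (as \<open>\<beta>\<^sub>*\<close> is decreasing) while
  \<open>-F_c - x = -u < 0\<close>; left of it \<open>-F_c - x = 0\<close> while the source is \<open>\<le> 0\<close>.\<close>
lemma hjb_equation:
  assumes c: "c \<in> {0..1}"
  shows "max (- (\<sigma>\<^sup>2 / 2 * F_xx x c + \<theta> * (\<mu> - x) * F_x x c) + lam * F x c - lam * x * \<Phi> c)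
             (- F_c x c - x) = 0"
proof (cases "x > beta c")
  case True
  have "source x y = 0" if "y \<in> {c..1}" for y
    using beta_antimono[OF c, of y] that c True by (simp add: source_def)
  hence "integral {c..1} (source x) = 0" using integral_cong[of "{c..1}" "source x" "\<lambda>_. 0"] by simp
  moreover have "- F_c x c - x < 0" using w_pos[OF c True] True by (simp add: F_c_def u_def)
  ultimately show ?thesis unfolding hjb_operator_integral[OF c] by simp
next
  case False
  have "integral {c..1} (source x) \<le> 0"
  proof (cases "source x integrable_on {c..1}")
    case True
    have "integral {c..1} (source x) \<le> integral {c..1} (\<lambda>_. 0)"
      using source_nonpos c by (intro integral_le[OF True]) auto
    thus ?thesis by simp
  qed (simp add: not_integrable_integral)
  moreover have "- F_c x c - x = 0" using False by (simp add: F_c_def u_def)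
  ultimately show ?thesis unfolding hjb_operator_integral[OF c] by simp
qed

end


theorem mainTheorem6:
  fixes \<theta> \<sigma> \<mu> lam :: real and \<Phi> :: "real \<Rightarrow> real"
  assumes params: "\<theta> > 0" "\<sigma> > 0" "\<mu> > 0" "lam > 0"
    and Phi_C2: "\<forall>x. \<Phi> differentiable at x" "\<forall>x. deriv \<Phi> differentiable at x"
                "continuous_on UNIV (deriv (deriv \<Phi>))"
    and Phi_noninc: "antimono \<Phi>"
    and Phi_sconv: "strictly_convex \<Phi>"
    and Phi_1: "\<Phi> 1 = 0"
    and k_pos: "\<forall>c\<in>{0..1}. kfun \<theta> lam \<Phi> c > 0"
  shows "\<exists>Fx Fxx Fc :: real \<Rightarrow> real \<Rightarrow> real.
     continuous_on (UNIV \<times> {0..1}) (\<lambda>(x, c). Ffun \<theta> \<sigma> \<mu> lam \<Phi> x c) \<and>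
     continuous_on (UNIV \<times> {0..1}) (\<lambda>(x, c). Fx x c) \<and>
     continuous_on (UNIV \<times> {0..1}) (\<lambda>(x, c). Fxx x c) \<and>
     continuous_on (UNIV \<times> {0..1}) (\<lambda>(x, c). Fc x c) \<and>
     (\<forall>x. \<forall>c\<in>{0..1}.
        ((\<lambda>y. Ffun \<theta> \<sigma> \<mu> lam \<Phi> y c) has_real_derivative Fx x c) (at x) \<and>
        ((\<lambda>y. Fx y c) has_real_derivative Fxx x c) (at x) \<and>
        ((\<lambda>d. Ffun \<theta> \<sigma> \<mu> lam \<Phi> x d) has_real_derivative Fc x c) (at c within {0..1}) \<and>
        max (- (\<sigma>\<^sup>2 / 2 * Fxx x c + \<theta> * (\<mu> - x) * Fx x c)
               + lam * Ffun \<theta> \<sigma> \<mu> lam \<Phi> x c - lam * x * \<Phi> c)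
            (- Fc x c - x) = 0)"
proof -
  interpret hjb_problem \<theta> \<sigma> \<mu> lam \<Phi>
    by unfold_locales (use params Phi_C2 Phi_sconv Phi_1 k_pos in auto)
  show ?thesis
  proof (rule exI[of _ F_x], rule exI[of _ F_xx], rule exI[of _ F_c], intro conjI allI ballI)
    show "continuous_on strip (\<lambda>(x, c). F x c)" by (rule F_cont)
    show "continuous_on strip (\<lambda>(x, c). F_x x c)" by (rule F_x_cont)
    show "continuous_on strip (\<lambda>(x, c). F_xx x c)" by (rule F_xx_cont)
    show "continuous_on strip (\<lambda>(x, c). F_c x c)" by (rule F_c_cont)
  next
    fix x c :: real assume c: "c \<in> {0..1}"
    show "((\<lambda>y. F y c) has_real_derivative F_x x c) (at x)" by (rule F_has_x_derivative[OF c])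
    show "((\<lambda>y. F_x y c) has_real_derivative F_xx x c) (at x)"
      using u_xx_integrable_and_F_x_deriv[OF c] by blast
    show "((\<lambda>d. F x d) has_real_derivative F_c x c) (at c within {0..1})"
      by (rule F_has_c_derivative[OF c])
    show "max (- (\<sigma>\<^sup>2 / 2 * F_xx x c + \<theta> * (\<mu> - x) * F_x x c) + lam * F x c - lam * x * \<Phi> c)
            (- F_c x c - x) = 0" by (rule hjb_equation[OF c])
  qed
qed

end
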